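(* Let $q\in\ell^1(\mathbb{Z})$ be real, $H=-\Delta_L+q$ on $\ell^2(\mathbb{Z})$, and $\mathcal{R}(\omega)=(H-\omega)^{-1}$. Then for every $\omega\in(0,4)$ and every $\sigma>1/2$, $\mathcal{R}(\omega\pm\mathrm{i}\varepsilon)$ converges as $\varepsilon\to0+$ in the operator norm of $\mathcal{L}(\ell^2_\sigma,\ell^2_{-\sigma})$ to a limit denoted $\mathcal{R}(\omega\pm\mathrm{i}0)$.
   Context: $(Hu)_n=-(u_{n+1}-2u_n+u_{n-1})+q_nu_n$; $\ell^2_\sigma$ has norm $\big(\sum_n(1+|n|)^{2\sigma}|u(n)|^2\big)^{1/2}$. *)

theory Defs
  imports "HOL-Analysis.Analysis"
begin

definition Hop :: "(int \<Rightarrow> real) \<Rightarrow> (int \<Rightarrow> complex) \<Rightarrow> int \<Rightarrow> complex" where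
  "Hop q u n = - (u (n + 1) - 2 * u n + u (n - 1)) + complex_of_real (q n) * u n"

definition l2w :: "real \<Rightarrow> (int \<Rightarrow> complex) \<Rightarrow> bool" where
  "l2w \<sigma> u \<longleftrightarrow> (\<lambda>n. (1 + real_of_int \<bar>n\<bar>) powr (2 * \<sigma>) * (cmod (u n))\<^sup>2) summable_on UNIV"

definition wnorm :: "real \<Rightarrow> (int \<Rightarrow> complex) \<Rightarrow> real" where
  "wnorm \<sigma> u = sqrt (\<Sum>\<^sub>\<infinity>n. (1 + real_of_int \<bar>n\<bar>) powr (2 * \<sigma>) * (cmod (u n))\<^sup>2)"

definition resolvent :: "(int \<Rightarrow> real) \<Rightarrow> complex \<Rightarrow> (int \<Rightarrow> complex) \<Rightarrow> (int \<Rightarrow> complex)" where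
  "resolvent q z f = (THE u. l2w 0 u \<and> (\<forall>n. Hop q u n - z * u n = f n))"

end

theory Submission
  imports Defs
begin

text \<open>Write \<open>\<omega> = 2 - \<zeta> - 1/\<zeta>\<close> with \<open>\<bar>\<zeta>\<bar> \<le> 1\<close>. The equation \<open>(H - \<omega>) u = 0\<close> has Jost solutions
  \<open>f\<^sub>\<plusminus>(n) = \<zeta>\<^sup>\<plusminus>\<^sup>n h\<^sub>\<plusminus>(n)\<close> with \<open>h\<^sub>\<plusminus> \<longrightarrow> 1\<close> at \<open>\<plusminus>\<infinity>\<close>, obtained from a Volterra equation by Picard
  iteration; for \<open>q \<in> \<ell>\<^sup>1\<close> the iteration converges uniformly in \<open>\<zeta>\<close> as long as \<open>\<zeta>\<close> stays away from
  \<open>\<plusminus>1\<close>, so \<open>f\<^sub>\<plusminus>\<close> and their Wronskian \<open>W\<close> are bounded and continuous there. For \<open>Im \<omega> \<noteq> 0\<close> the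
  root \<open>\<zeta>\<close> lies in the open disc and the resolvent has the kernel
  \<open>G(n, m) = f\<^sub>+(max n m) f\<^sub>-(min n m) / W\<close>, since the equation has no nonzero \<open>\<ell>\<^sup>2\<close> solution.
  As \<open>\<epsilon> \<rightarrow> 0+\<close> the root for \<open>\<omega> \<plusminus> \<i>\<epsilon>\<close>, \<open>0 < \<omega> < 4\<close>, tends to a point \<open>\<zeta>\<^sub>0 \<noteq> \<plusminus>1\<close> of the unit circle,
  where \<open>W \<noteq> 0\<close> by a Wronskian identity with the conjugate solutions. The kernels are then
  uniformly bounded and converge pointwise, hence by dominated convergence in the weighted
  Hilbert--Schmidt norm \<open>\<Sum>\<^sub>n\<^sub>,\<^sub>m (1+\<bar>n\<bar>)\<^sup>-\<^sup>2\<^sup>\<sigma> (1+\<bar>m\<bar>)\<^sup>-\<^sup>2\<^sup>\<sigma> \<bar>G(n,m)\<bar>\<^sup>2\<close>, which is finite for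
  \<open>\<sigma> > 1/2\<close> and controls the norm of operators \<open>\<ell>\<^sup>2\<^sub>\<sigma> \<rightarrow> \<ell>\<^sup>2\<^sub>-\<^sub>\<sigma>\<close>.\<close>

section \<open>Sums over the integers\<close>

lemma nat_offset_suminf_le_infsum:
  fixes g :: "int \<Rightarrow> real"
  assumes g: "g summable_on UNIV" and nn: "\<And>n. g n \<ge> 0"
  shows "summable (\<lambda>j::nat. g (a + int j))" "(\<Sum>j. g (a + int j)) \<le> infsum g UNIV"
proof -
  have inj: "inj (\<lambda>j::nat. a + int j)" by (auto simp: inj_def)
  have gr: "g summable_on range (\<lambda>j::nat. a + int j)"
    using g by (rule summable_on_subset) simp
  then have s: "(\<lambda>j::nat. g (a + int j)) summable_on UNIV"
    using summable_on_reindex[OF inj, of g] by (simp add: o_def)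
  have nn': "\<And>j. g (a + int j) \<ge> 0" by (rule nn)
  show sm: "summable (\<lambda>j::nat. g (a + int j))"
    using summable_on_UNIV_nonneg_real_iff[of "\<lambda>j. g (a + int j)", OF nn'] s by simp
  have "((\<lambda>j. g (a + int j)) has_sum (\<Sum>j. g (a + int j))) UNIV"
    by (rule sums_nonneg_imp_has_sum[OF summable_sums[OF sm] nn'])
  then have "(\<Sum>j. g (a + int j)) = infsum (\<lambda>j::nat. g (a + int j)) UNIV"
    by (simp add: infsumI)
  also have "\<dots> = infsum g (range (\<lambda>j::nat. a + int j))"
    using infsum_reindex[OF inj, of g] by (simp add: o_def)
  also have "\<dots> \<le> infsum g UNIV"
    by (rule infsum_mono_neutral[OF gr g]) (simp_all add: nn)
  finally show "(\<Sum>j. g (a + int j)) \<le> infsum g UNIV" .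
qed

lemma nat_offset_suminf_tendsto_0:
  fixes g :: "int \<Rightarrow> real"
  assumes g: "g summable_on UNIV" and nn: "\<And>n. g n \<ge> 0"
  shows "(\<lambda>k. \<Sum>j. g (a + int k + int j)) \<longlonglongrightarrow> 0"
proof -
  have sm: "summable (\<lambda>j::nat. g (a + int j))" by (rule nat_offset_suminf_le_infsum[OF g nn])
  have "a + int k + int j = a + int (j + k)" for k j :: nat by simp
  then have "(\<lambda>k. \<Sum>j. g (a + int k + int j)) = (\<lambda>k. \<Sum>j. g (a + int (j + k)))"
    by presburger
  moreover have "(\<lambda>k. \<Sum>j. g (a + int (j + k))) \<longlonglongrightarrow> 0"
    unfolding LIMSEQ_iff
  proof (intro allI impI)
    fix r :: real assume "0 < r"
    from suminf_exist_split[OF this sm] obtain N where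
      "\<forall>n\<ge>N. norm (\<Sum>i. g (a + int (i + n))) < r" by blast
    then show "\<exists>N. \<forall>n\<ge>N. norm ((\<Sum>j. g (a + int (j + n))) - 0) < r" by auto
  qed
  ultimately show ?thesis by simp
qed

lemma summable_on_int_from_nat:
  fixes g :: "int \<Rightarrow> real"
  assumes "summable (\<lambda>n. g (int n))" "summable (\<lambda>n. g (- int n))" "\<And>n. g n \<ge> 0"
  shows "g summable_on UNIV"
proof -
  have i1: "inj (\<lambda>n::nat. int n)" and i2: "inj (\<lambda>n::nat. - int n)" by (auto simp: inj_def)
  have "(\<lambda>n. g (int n)) summable_on UNIV"
    by (rule summable_nonneg_imp_summable_on) (use assms in auto)
  then have 1: "g summable_on range (\<lambda>n::nat. int n)"
    using summable_on_reindex[OF i1, of g] by (simp add: o_def)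
  have "(\<lambda>n. g (- int n)) summable_on UNIV"
    by (rule summable_nonneg_imp_summable_on) (use assms in auto)
  then have 2: "g summable_on range (\<lambda>n::nat. - int n)"
    using summable_on_reindex[OF i2, of g] by (simp add: o_def)
  have "range (\<lambda>n::nat. int n) \<union> range (\<lambda>n::nat. - int n) = UNIV"
  proof -
    have "x \<in> range (\<lambda>n::nat. int n) \<union> range (\<lambda>n::nat. - int n)" for x :: int
    proof (cases "x \<ge> 0")
      case True then have "x = int (nat x)" by simp
      then show ?thesis by (intro UnI1) (rule range_eqI)
    next
      case False then have "x = - int (nat (-x))" by simp
      then show ?thesis by (intro UnI2) (rule range_eqI)
    qed
    then show ?thesis by blast
  qed
  with summable_on_union[OF 1 2] show ?thesis by simp
qed

lemma summable_on_power_abs_int: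
  fixes r :: real assumes "0 \<le> r" "r < 1"
  shows "(\<lambda>k::int. r ^ nat \<bar>k\<bar>) summable_on UNIV"
proof (rule summable_on_int_from_nat)
  show "summable (\<lambda>n. r ^ nat \<bar>int n\<bar>)" using summable_geometric[of r] assms by simp
  show "summable (\<lambda>n. r ^ nat \<bar>- int n\<bar>)" using summable_geometric[of r] assms by simp
qed (use assms in simp)

lemma summable_on_int_shift:
  fixes g :: "int \<Rightarrow> real"
  shows "(\<lambda>n. g (n + c)) summable_on UNIV \<longleftrightarrow> g summable_on UNIV"
proof -
  have "bij_betw (\<lambda>n. n + c) UNIV UNIV"
    by (rule bij_betwI[where g="\<lambda>n. n - c"]) auto
  then show ?thesis by (rule summable_on_reindex_bij_betw)
qed

lemma infsum_int_shift:
  fixes g :: "int \<Rightarrow> real"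
  shows "infsum (\<lambda>n. g (n + c)) UNIV = infsum g UNIV"
proof -
  have "bij_betw (\<lambda>n. n + c) UNIV UNIV"
    by (rule bij_betwI[where g="\<lambda>n. n - c"]) auto
  then show ?thesis by (rule infsum_reindex_bij_betw)
qed

lemma summable_on_diff:
  fixes f g :: "'a \<Rightarrow> 'b::topological_ab_group_add"
  assumes "f summable_on A" "g summable_on A"
  shows "(\<lambda>x. f x - g x) summable_on A"
  using summable_on_add[OF assms(1) summable_on_uminus[THEN iffD2, OF assms(2)]] by simp

lemma infsum_diff:
  fixes f g :: "'a \<Rightarrow> 'b::{topological_ab_group_add, t2_space}"
  assumes "f summable_on A" "g summable_on A"
  shows "infsum (\<lambda>x. f x - g x) A = infsum f A - infsum g A"
  using infsum_add[OF assms(1) summable_on_uminus[THEN iffD2, OF assms(2)]]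
  by (simp add: infsum_uminus)

lemma infsum_Cauchy_Schwarz:
  fixes a b :: "'a \<Rightarrow> real"
  assumes a: "(\<lambda>x. (a x)\<^sup>2) summable_on A" and b: "(\<lambda>x. (b x)\<^sup>2) summable_on A"
    and an: "\<And>x. a x \<ge> 0" and bn: "\<And>x. b x \<ge> 0"
  shows "(\<lambda>x. a x * b x) summable_on A"
    "infsum (\<lambda>x. a x * b x) A \<le> sqrt (infsum (\<lambda>x. (a x)\<^sup>2) A) * sqrt (infsum (\<lambda>x. (b x)\<^sup>2) A)"
proof -
  have "(\<lambda>x. (a x)\<^sup>2 + (b x)\<^sup>2) summable_on A" using a b by (rule summable_on_add)
  moreover have "a x * b x \<le> (a x)\<^sup>2 + (b x)\<^sup>2" for x
    using sum_squares_bound[of "a x" "b x"] mult_nonneg_nonneg[OF an[of x] bn[of x]] by linarith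
  ultimately show sm: "(\<lambda>x. a x * b x) summable_on A"
    by (rule summable_on_comparison_test) (simp add: an bn)
  show "infsum (\<lambda>x. a x * b x) A \<le> sqrt (infsum (\<lambda>x. (a x)\<^sup>2) A) * sqrt (infsum (\<lambda>x. (b x)\<^sup>2) A)"
  proof (rule infsum_le_finite_sums[OF sm])
    fix F assume F: "finite F" "F \<subseteq> A"
    have "(sum (\<lambda>x. a x * b x) F)\<^sup>2 \<le> sum (\<lambda>x. (a x)\<^sup>2) F * sum (\<lambda>x. (b x)\<^sup>2) F"
      by (rule Cauchy_Schwarz_ineq_sum)
    moreover have "sum (\<lambda>x. a x * b x) F \<ge> 0" using an bn by (simp add: sum_nonneg)
    ultimately have "sum (\<lambda>x. a x * b x) F \<le> sqrt (sum (\<lambda>x. (a x)\<^sup>2) F) * sqrt (sum (\<lambda>x. (b x)\<^sup>2) F)"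
      by (metis real_le_rsqrt real_sqrt_mult)
    also have "\<dots> \<le> sqrt (infsum (\<lambda>x. (a x)\<^sup>2) A) * sqrt (infsum (\<lambda>x. (b x)\<^sup>2) A)"
      by (intro mult_mono real_sqrt_le_mono finite_sum_le_infsum[OF a F] finite_sum_le_infsum[OF b F])
        (auto simp: infsum_nonneg sum_nonneg)
    finally show "sum (\<lambda>x. a x * b x) F \<le> sqrt (infsum (\<lambda>x. (a x)\<^sup>2) A) * sqrt (infsum (\<lambda>x. (b x)\<^sup>2) A)" .
  qed
qed

lemma infsum_tail_less:
  fixes v :: "'a \<Rightarrow> real"
  assumes v: "v summable_on UNIV" and e: "e > 0"
  obtains S where "finite S" "infsum v (UNIV - S) < e"
proof -
  obtain S where S: "finite S" "dist (sum v S) (infsum v UNIV) \<le> e / 2"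
    using infsum_finite_approximation[OF v, of "e / 2"] e by auto
  have "infsum v (UNIV - S) = infsum v UNIV - sum v S"
    using infsum_Diff[OF v summable_on_finite[OF S(1)]] S(1) by simp
  moreover have "\<bar>sum v S - infsum v UNIV\<bar> \<le> e / 2" using S(2) by (simp add: dist_real_def)
  ultimately have "infsum v (UNIV - S) < e" using e by arith
  with S(1) show ?thesis by (rule that)
qed

lemma infsum_tendsto_0_dominated:
  fixes v :: "'a \<Rightarrow> real" and \<phi> :: "'b \<Rightarrow> 'a \<Rightarrow> real"
  assumes vs: "v summable_on UNIV" and vn: "\<And>m. 0 \<le> v m"
    and dom: "\<forall>\<^sub>F x in F. \<forall>m. 0 \<le> \<phi> x m \<and> \<phi> x m \<le> K"
    and lim: "\<And>m. ((\<lambda>x. \<phi> x m) \<longlongrightarrow> 0) F"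
  shows "((\<lambda>x. infsum (\<lambda>m. v m * \<phi> x m) UNIV) \<longlongrightarrow> 0) F"
proof (rule order_tendstoI)
  fix e :: real assume "e < 0"
  show "\<forall>\<^sub>F x in F. e < infsum (\<lambda>m. v m * \<phi> x m) UNIV"
    using dom
  proof eventually_elim
    case (elim x)
    have "0 \<le> infsum (\<lambda>m. v m * \<phi> x m) UNIV" by (rule infsum_nonneg) (use elim vn in simp)
    with \<open>e < 0\<close> show ?case by linarith
  qed
next
  fix e :: real assume e: "0 < e"
  define K1 where "K1 = \<bar>K\<bar> + 1"
  have K1: "0 < K1" "K \<le> K1" by (simp_all add: K1_def)
  obtain S where S: "finite S" "infsum v (UNIV - S) < e / (2 * K1)"
    using infsum_tail_less[OF vs, of "e / (2 * K1)"] e K1 by auto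
  have "((\<lambda>x. \<Sum>m\<in>S. v m * \<phi> x m) \<longlongrightarrow> (\<Sum>m\<in>S. v m * 0)) F"
    by (intro tendsto_sum tendsto_mult tendsto_const lim)
  then have head: "\<forall>\<^sub>F x in F. (\<Sum>m\<in>S. v m * \<phi> x m) < e / 2"
    using e by (intro order_tendstoD(2)) auto
  show "\<forall>\<^sub>F x in F. infsum (\<lambda>m. v m * \<phi> x m) UNIV < e"
    using dom head
  proof eventually_elim
    case (elim x)
    have K0: "0 \<le> K" using elim(1) by (meson order.trans)
    have le: "v m * \<phi> x m \<le> v m * K" for m using elim(1) vn[of m] by (simp add: mult_left_mono)
    have vp: "(\<lambda>m. v m * \<phi> x m) summable_on UNIV"
      by (rule summable_on_comparison_test[OF summable_on_cmult_left[OF vs, of K] le])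
        (use elim(1) vn in simp)
    have sc: "v summable_on (UNIV - S)" by (rule summable_on_subset[OF vs]) simp
    have "infsum (\<lambda>m. v m * \<phi> x m) (UNIV - S) \<le> infsum (\<lambda>m. v m * K) (UNIV - S)"
      by (rule infsum_mono[OF summable_on_subset[OF vp] summable_on_cmult_left[OF sc] le]) simp
    also have "\<dots> = infsum v (UNIV - S) * K" by (rule infsum_cmult_left) (use sc in simp)
    also have "\<dots> \<le> e / (2 * K1) * K1" using S(2) K0 K1 e
      by (intro mult_mono) auto
    also have "\<dots> = e / 2" using K1 by simp
    finally have tail: "infsum (\<lambda>m. v m * \<phi> x m) (UNIV - S) \<le> e / 2" .
    have "infsum (\<lambda>m. v m * \<phi> x m) UNIV = (\<Sum>m\<in>S. v m * \<phi> x m) + infsum (\<lambda>m. v m * \<phi> x m) (UNIV - S)"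
      using infsum_Diff[OF vp summable_on_finite[OF S(1)]] S(1) by simp
    with elim(2) tail show ?case by linarith
  qed
qed

lemma infsum_delta:
  fixes f :: "int \<Rightarrow> complex"
  shows "infsum (\<lambda>m. (if n = m then 1 else 0) * f m) UNIV = f n"
proof -
  have "infsum (\<lambda>m. (if n = m then 1 else 0) * f m) UNIV = infsum f {n}"
    by (rule infsum_cong_neutral) auto
  then show ?thesis by simp
qed

section \<open>Jost solutions\<close>

text \<open>The spectral parameter is \<open>\<omega> = 2 - \<zeta> - 1/\<zeta>\<close>; keeping \<open>\<zeta>\<close> away from \<open>\<plusminus>1\<close> keeps
  \<open>\<omega>\<close> away from the thresholds \<open>0\<close> and \<open>4\<close> of the continuous spectrum.\<close>

definition jost_domain :: "real \<Rightarrow> complex set" where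
  "jost_domain \<delta> = {\<zeta>. \<zeta> \<noteq> 0 \<and> cmod \<zeta> \<le> 1 \<and> \<delta> \<le> cmod (\<zeta> - 1/\<zeta>)}"

definition above :: "int \<Rightarrow> nat \<Rightarrow> int" where
  "above n j = n + 1 + int j"

text \<open>A fixed point \<open>h = volterra p \<zeta> h\<close> gives the solution \<open>f n = \<zeta>\<^sup>n h n\<close> of
  \<open>f (n+1) + f (n-1) = (\<zeta> + 1/\<zeta> + p n) f n\<close> with \<open>h n \<longrightarrow> 1\<close> at \<open>+\<infinity>\<close>: \<open>jost_kernel \<zeta> k\<close> is
  \<open>\<zeta>\<^sup>k\<close> times the free Green function \<open>(\<zeta>\<^sup>k - \<zeta>\<^sup>-\<^sup>k) / (\<zeta> - 1/\<zeta>)\<close> at distance \<open>k\<close>.\<close>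

definition jost_kernel :: "complex \<Rightarrow> nat \<Rightarrow> complex" where
  "jost_kernel \<zeta> k = (\<zeta>^(2*k) - 1) / (\<zeta> - 1/\<zeta>)"

definition volterra :: "(int \<Rightarrow> real) \<Rightarrow> complex \<Rightarrow> (int \<Rightarrow> complex) \<Rightarrow> int \<Rightarrow> complex" where
  "volterra p \<zeta> h n = 1 + (\<Sum>j. jost_kernel \<zeta> (Suc j) * complex_of_real (p (above n j)) * h (above n j))"

definition picard :: "(int \<Rightarrow> real) \<Rightarrow> complex \<Rightarrow> nat \<Rightarrow> int \<Rightarrow> complex" where
  "picard p \<zeta> i = (volterra p \<zeta> ^^ i) (\<lambda>_. 1)"

definition picard_incr :: "(int \<Rightarrow> real) \<Rightarrow> complex \<Rightarrow> nat \<Rightarrow> int \<Rightarrow> complex" where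
  "picard_incr p \<zeta> i n = picard p \<zeta> (Suc i) n - picard p \<zeta> i n"

definition jost_factor :: "(int \<Rightarrow> real) \<Rightarrow> complex \<Rightarrow> int \<Rightarrow> complex" where
  "jost_factor p \<zeta> n = 1 + (\<Sum>i. picard_incr p \<zeta> i n)"

lemma jost_domain_nonzero: "\<zeta> \<in> jost_domain \<delta> \<Longrightarrow> \<zeta> \<noteq> 0"
  by (simp add: jost_domain_def)

lemma above_Suc: "above n (Suc j) = above (n + 1) j" by (simp add: above_def)
lemma above_pred: "above (n - 1) j = n + int j" by (simp add: above_def)
lemma picard_0: "picard p \<zeta> 0 = (\<lambda>_. 1)" by (simp add: picard_def)
lemma picard_Suc: "picard p \<zeta> (Suc i) = volterra p \<zeta> (picard p \<zeta> i)" by (simp add: picard_def)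
lemma jost_kernel_0: "jost_kernel \<zeta> 0 = 0" by (simp add: jost_kernel_def)

lemma jost_kernel_1: assumes "\<zeta> \<noteq> 0" "\<zeta> - 1/\<zeta> \<noteq> 0" shows "jost_kernel \<zeta> 1 = \<zeta>"
proof -
  have "\<zeta> - 1/\<zeta> = (\<zeta>^2 - 1) / \<zeta>" using assms by (simp add: field_simps power2_eq_square)
  then show ?thesis using assms unfolding jost_kernel_def by (simp add: field_simps)
qed

lemma jost_kernel_recurrence: assumes "\<zeta> \<noteq> 0" "\<zeta> - 1/\<zeta> \<noteq> 0"
  shows "\<zeta> * jost_kernel \<zeta> j + jost_kernel \<zeta> (Suc (Suc j)) / \<zeta> = (\<zeta> + 1/\<zeta>) * jost_kernel \<zeta> (Suc j)"
proof -
  define x where "x = \<zeta>^(2*j)"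
  have e1: "\<zeta>^(2 * Suc j) = x * \<zeta>^2" by (simp add: x_def power_add mult_Suc_right power2_eq_square)
  have e2: "\<zeta>^(2 * Suc (Suc j)) = x * \<zeta>^4" by (simp add: x_def power_add mult_Suc_right power4_eq_xxxx)
  have "\<zeta> * (x - 1) + (x * \<zeta>^4 - 1) / \<zeta> = (\<zeta> + 1/\<zeta>) * (x * \<zeta>^2 - 1)"
    using assms(1) by (simp add: field_simps power2_eq_square power4_eq_xxxx)
  then show ?thesis
    unfolding jost_kernel_def e1 e2 x_def[symmetric] using assms(1) by (auto simp: divide_simps ac_simps)
qed

lemma jost_kernel_series_recurrence:
  fixes A :: "nat \<Rightarrow> complex"
  assumes "\<zeta> \<noteq> 0" "\<zeta> - 1/\<zeta> \<noteq> 0"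
    and s0: "summable (\<lambda>j. jost_kernel \<zeta> j * A j)"
    and s1: "summable (\<lambda>j. jost_kernel \<zeta> (Suc j) * A j)"
    and s2: "summable (\<lambda>j. jost_kernel \<zeta> (Suc (Suc j)) * A j)"
  shows "\<zeta> * (\<Sum>j. jost_kernel \<zeta> j * A j) + (\<Sum>j. jost_kernel \<zeta> (Suc (Suc j)) * A j) / \<zeta>
       = (\<zeta> + 1/\<zeta>) * (\<Sum>j. jost_kernel \<zeta> (Suc j) * A j)"
proof -
  have termwise: "(\<lambda>j. \<zeta> * (jost_kernel \<zeta> j * A j) + jost_kernel \<zeta> (Suc (Suc j)) * A j / \<zeta>)
      = (\<lambda>j. (\<zeta> + 1/\<zeta>) * (jost_kernel \<zeta> (Suc j) * A j))"
  proof
    fix j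
    from arg_cong[OF jost_kernel_recurrence[OF assms(1,2), of j], of "\<lambda>x. x * A j"]
    show "\<zeta> * (jost_kernel \<zeta> j * A j) + jost_kernel \<zeta> (Suc (Suc j)) * A j / \<zeta>
        = (\<zeta> + 1/\<zeta>) * (jost_kernel \<zeta> (Suc j) * A j)" by (simp add: algebra_simps)
  qed
  have "\<zeta> * (\<Sum>j. jost_kernel \<zeta> j * A j) + (\<Sum>j. jost_kernel \<zeta> (Suc (Suc j)) * A j) / \<zeta>
      = (\<Sum>j. \<zeta> * (jost_kernel \<zeta> j * A j)) + (\<Sum>j. jost_kernel \<zeta> (Suc (Suc j)) * A j / \<zeta>)"
    by (simp add: suminf_mult[OF s0] suminf_divide[OF s2])
  also have "\<dots> = (\<Sum>j. \<zeta> * (jost_kernel \<zeta> j * A j) + jost_kernel \<zeta> (Suc (Suc j)) * A j / \<zeta>)"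
    by (rule suminf_add[OF summable_mult[OF s0] summable_divide[OF s2]])
  also have "\<dots> = (\<zeta> + 1/\<zeta>) * (\<Sum>j. jost_kernel \<zeta> (Suc j) * A j)"
    unfolding termwise by (rule suminf_mult[OF s1])
  finally show ?thesis .
qed

locale summable_potential =
  fixes p :: "int \<Rightarrow> real" and \<delta> :: real
  assumes summable_abs: "(\<lambda>n. \<bar>p n\<bar>) summable_on UNIV" and delta_pos: "0 < \<delta>"
begin

definition "mass = infsum (\<lambda>n. \<bar>p n\<bar>) UNIV"

definition "kernel_bound = 2 / \<delta>"

definition "tail_mass n = (\<Sum>j. \<bar>p (above n j)\<bar>)"

definition "weight_bound = exp (2 * kernel_bound * mass)"

lemma kernel_bound_pos: "0 < kernel_bound" using delta_pos by (simp add: kernel_bound_def)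

lemma norm_jost_kernel_le:
  assumes "\<zeta> \<in> jost_domain \<delta>" shows "cmod (jost_kernel \<zeta> m) \<le> kernel_bound"
proof -
  from assms have z: "cmod \<zeta> \<le> 1" "\<delta> \<le> cmod (\<zeta> - 1/\<zeta>)" by (auto simp: jost_domain_def)
  have a: "cmod (\<zeta>^(2*m) - 1) \<le> cmod (\<zeta>^(2*m)) + 1" by (metis norm_triangle_ineq4 norm_one)
  have b: "cmod (\<zeta>^(2*m)) \<le> 1" using z by (simp add: norm_power power_le_one)
  have num: "cmod (\<zeta>^(2*m) - 1) \<le> 2" using a b by linarith
  have "cmod (jost_kernel \<zeta> m) = cmod (\<zeta>^(2*m) - 1) / cmod (\<zeta> - 1/\<zeta>)" by (simp add: jost_kernel_def norm_divide)
  also have "\<dots> \<le> 2 / \<delta>" using num z delta_pos by (intro frac_le) auto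
  finally show ?thesis by (simp add: kernel_bound_def)
qed

lemma summable_above: "summable (\<lambda>j. \<bar>p (above n j)\<bar>)"
  unfolding above_def by (rule nat_offset_suminf_le_infsum(1)[OF summable_abs]) simp

lemma tail_mass_le_mass: "tail_mass n \<le> mass"
  unfolding tail_mass_def mass_def above_def by (rule nat_offset_suminf_le_infsum(2)[OF summable_abs]) simp

lemma tail_mass_nonneg: "0 \<le> tail_mass n"
  unfolding tail_mass_def by (rule suminf_nonneg[OF summable_above]) simp

lemma mass_nonneg: "0 \<le> mass" using tail_mass_nonneg tail_mass_le_mass order.trans by blast

lemma tail_mass_step: "tail_mass n = \<bar>p (n+1)\<bar> + tail_mass (n+1)"
proof -
  have "(\<Sum>j. \<bar>p (above n (Suc j))\<bar>) = (\<Sum>j. \<bar>p (above n j)\<bar>) - \<bar>p (above n 0)\<bar>"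
    by (rule suminf_split_head[OF summable_above])
  then show ?thesis unfolding tail_mass_def above_Suc by (simp add: above_def)
qed

lemma tail_mass_tendsto_0: "(\<lambda>k. tail_mass (n + int k)) \<longlonglongrightarrow> 0"
proof -
  have "(\<lambda>k. \<Sum>j. \<bar>p ((n + 1) + int k + int j)\<bar>) \<longlonglongrightarrow> 0"
    by (rule nat_offset_suminf_tendsto_0[OF summable_abs]) simp
  moreover have "\<And>k j. above (n + int k) j = (n + 1) + int k + int j" by (simp add: above_def)
  ultimately show ?thesis unfolding tail_mass_def by simp
qed

lemma weighted_tail_sum:
  shows "summable (\<lambda>j. \<bar>p (above n j)\<bar> * exp (2 * kernel_bound * tail_mass (above n j)))"
    and "(\<Sum>j. \<bar>p (above n j)\<bar> * exp (2 * kernel_bound * tail_mass (above n j))) \<le> (exp (2 * kernel_bound * tail_mass n) - 1) / (2 * kernel_bound)"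
proof -
  define ew where "ew k = exp (2 * kernel_bound * tail_mass (n + int k))" for k :: nat
  have shk: "above n j = n + int j + 1" for j by (simp add: above_def)
  have step: "2 * kernel_bound * (\<bar>p (above n j)\<bar> * exp (2 * kernel_bound * tail_mass (above n j))) \<le> ew j - ew (Suc j)" for j
  proof -
    have q: "tail_mass (n + int j) = \<bar>p (above n j)\<bar> + tail_mass (above n j)"
      using tail_mass_step[of "n + int j"] by (simp add: shk)
    have e: "ew (Suc j) = exp (2 * kernel_bound * tail_mass (above n j))" by (simp add: ew_def shk ac_simps)
    have "ew j = exp (2 * kernel_bound * \<bar>p (above n j)\<bar>) * ew (Suc j)"
      unfolding e by (simp add: ew_def q distrib_left exp_add)
    moreover have "1 + 2 * kernel_bound * \<bar>p (above n j)\<bar> \<le> exp (2 * kernel_bound * \<bar>p (above n j)\<bar>)"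
      by (rule exp_ge_add_one_self)
    moreover have "ew (Suc j) \<ge> 0" by (simp add: ew_def)
    ultimately have "(1 + 2 * kernel_bound * \<bar>p (above n j)\<bar>) * ew (Suc j) \<le> ew j"
      by (simp add: mult_right_mono)
    then show ?thesis by (simp add: e algebra_simps)
  qed
  have "ew \<longlonglongrightarrow> exp (2 * kernel_bound * 0)"
    unfolding ew_def by (intro tendsto_intros tail_mass_tendsto_0)
  then have tel: "(\<lambda>j. ew j - ew (Suc j)) sums (ew 0 - 1)"
    using telescope_sums'[of ew 1] by simp
  then have tel2: "(\<lambda>j. (ew j - ew (Suc j)) / (2 * kernel_bound)) sums ((ew 0 - 1) / (2 * kernel_bound))"
    by (rule sums_divide)
  have bnd: "\<bar>p (above n j)\<bar> * exp (2 * kernel_bound * tail_mass (above n j)) \<le> (ew j - ew (Suc j)) / (2 * kernel_bound)" for j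
    using step[of j] kernel_bound_pos by (simp add: field_simps)
  show sm: "summable (\<lambda>j. \<bar>p (above n j)\<bar> * exp (2 * kernel_bound * tail_mass (above n j)))"
    by (rule summable_comparison_test[OF _ sums_summable[OF tel2]]) (use bnd in auto)
  have "(\<Sum>j. \<bar>p (above n j)\<bar> * exp (2 * kernel_bound * tail_mass (above n j))) \<le> (\<Sum>j. (ew j - ew (Suc j)) / (2 * kernel_bound))"
    by (rule suminf_le[OF bnd sm sums_summable[OF tel2]])
  also have "\<dots> = (ew 0 - 1) / (2 * kernel_bound)" using tel2 by (simp add: sums_iff)
  finally show "(\<Sum>j. \<bar>p (above n j)\<bar> * exp (2 * kernel_bound * tail_mass (above n j))) \<le> (exp (2 * kernel_bound * tail_mass n) - 1) / (2 * kernel_bound)"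
    by (simp add: ew_def)
qed

text \<open>Against the weight \<open>exp (2 * kernel_bound * tail_mass n)\<close> one Volterra step contracts by \<open>1/2\<close>,
  because \<open>\<bar>p m\<bar> * exp (2 * kernel_bound * tail_mass m)\<close> telescopes (\<open>weighted_tail_sum\<close>); this replaces
  the factorial estimate of the Picard iterates.\<close>

lemma volterra_sum_contraction:
  assumes z: "\<zeta> \<in> jost_domain \<delta>" and c: "0 \<le> c" and d: "\<And>k. cmod (d k) \<le> c * exp (2 * kernel_bound * tail_mass k)"
  shows "summable (\<lambda>j. jost_kernel \<zeta> (Suc j) * complex_of_real (p (above n j)) * d (above n j))"
    and "cmod (\<Sum>j. jost_kernel \<zeta> (Suc j) * complex_of_real (p (above n j)) * d (above n j)) \<le> c / 2 * exp (2 * kernel_bound * tail_mass n)"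
proof -
  have b: "cmod (jost_kernel \<zeta> (Suc j) * complex_of_real (p (above n j)) * d (above n j))
      \<le> (kernel_bound * c) * (\<bar>p (above n j)\<bar> * exp (2 * kernel_bound * tail_mass (above n j)))" for j
  proof -
    have "cmod (jost_kernel \<zeta> (Suc j) * complex_of_real (p (above n j)) * d (above n j))
        = cmod (jost_kernel \<zeta> (Suc j)) * \<bar>p (above n j)\<bar> * cmod (d (above n j))" by (simp add: norm_mult)
    also have "\<dots> \<le> kernel_bound * \<bar>p (above n j)\<bar> * (c * exp (2 * kernel_bound * tail_mass (above n j)))"
      by (intro mult_mono norm_jost_kernel_le z d) (use kernel_bound_pos in auto)
    finally show ?thesis by (simp add: algebra_simps)
  qed
  have s2: "summable (\<lambda>j. (kernel_bound * c) * (\<bar>p (above n j)\<bar> * exp (2 * kernel_bound * tail_mass (above n j))))"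
    by (rule summable_mult[OF weighted_tail_sum(1)])
  show "summable (\<lambda>j. jost_kernel \<zeta> (Suc j) * complex_of_real (p (above n j)) * d (above n j))"
    by (rule summable_comparison_test[OF _ s2]) (use b in auto)
  have "cmod (\<Sum>j. jost_kernel \<zeta> (Suc j) * complex_of_real (p (above n j)) * d (above n j))
      \<le> (\<Sum>j. (kernel_bound * c) * (\<bar>p (above n j)\<bar> * exp (2 * kernel_bound * tail_mass (above n j))))"
    by (rule norm_suminf_le[OF b s2])
  also have "\<dots> = (kernel_bound * c) * (\<Sum>j. \<bar>p (above n j)\<bar> * exp (2 * kernel_bound * tail_mass (above n j)))"
    by (rule suminf_mult[OF weighted_tail_sum(1)])
  also have "\<dots> \<le> (kernel_bound * c) * ((exp (2 * kernel_bound * tail_mass n) - 1) / (2 * kernel_bound))"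
    by (rule mult_left_mono[OF weighted_tail_sum(2)]) (use kernel_bound_pos c in simp)
  also have "\<dots> \<le> c / 2 * exp (2 * kernel_bound * tail_mass n)"
    using kernel_bound_pos c by (simp add: field_simps)
  finally show "cmod (\<Sum>j. jost_kernel \<zeta> (Suc j) * complex_of_real (p (above n j)) * d (above n j)) \<le> c / 2 * exp (2 * kernel_bound * tail_mass n)" .
qed

lemma volterra_sum_bound:
  assumes z: "\<zeta> \<in> jost_domain \<delta>" and d: "\<And>k. cmod (d k) \<le> B"
  shows "summable (\<lambda>j. jost_kernel \<zeta> (Suc j) * complex_of_real (p (above n j)) * d (above n j))"
    and "cmod (\<Sum>j. jost_kernel \<zeta> (Suc j) * complex_of_real (p (above n j)) * d (above n j)) \<le> kernel_bound * B * tail_mass n"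
proof -
  have B: "0 \<le> B" using d[of 0] norm_ge_zero order.trans by blast
  have b: "cmod (jost_kernel \<zeta> (Suc j) * complex_of_real (p (above n j)) * d (above n j)) \<le> (kernel_bound * B) * \<bar>p (above n j)\<bar>" for j
  proof -
    have "cmod (jost_kernel \<zeta> (Suc j) * complex_of_real (p (above n j)) * d (above n j))
        = cmod (jost_kernel \<zeta> (Suc j)) * \<bar>p (above n j)\<bar> * cmod (d (above n j))" by (simp add: norm_mult)
    also have "\<dots> \<le> kernel_bound * \<bar>p (above n j)\<bar> * B"
      by (intro mult_mono norm_jost_kernel_le z d) (use kernel_bound_pos in auto)
    finally show ?thesis by (simp add: algebra_simps)
  qed
  have s2: "summable (\<lambda>j. (kernel_bound * B) * \<bar>p (above n j)\<bar>)" by (rule summable_mult[OF summable_above])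
  show "summable (\<lambda>j. jost_kernel \<zeta> (Suc j) * complex_of_real (p (above n j)) * d (above n j))"
    by (rule summable_comparison_test[OF _ s2]) (use b in auto)
  have "cmod (\<Sum>j. jost_kernel \<zeta> (Suc j) * complex_of_real (p (above n j)) * d (above n j)) \<le> (\<Sum>j. (kernel_bound * B) * \<bar>p (above n j)\<bar>)"
    by (rule norm_suminf_le[OF b s2])
  also have "\<dots> = kernel_bound * B * tail_mass n" unfolding tail_mass_def by (rule suminf_mult[OF summable_above])
  finally show "cmod (\<Sum>j. jost_kernel \<zeta> (Suc j) * complex_of_real (p (above n j)) * d (above n j)) \<le> kernel_bound * B * tail_mass n" .
qed

lemma volterra_diff:
  assumes z: "\<zeta> \<in> jost_domain \<delta>" and "\<And>k. cmod (d1 k) \<le> B1" and "\<And>k. cmod (d2 k) \<le> B2"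
  shows "volterra p \<zeta> d1 n - volterra p \<zeta> d2 n = (\<Sum>j. jost_kernel \<zeta> (Suc j) * complex_of_real (p (above n j)) * (d1 (above n j) - d2 (above n j)))"
proof -
  have "volterra p \<zeta> d1 n - volterra p \<zeta> d2 n = (\<Sum>j. jost_kernel \<zeta> (Suc j) * complex_of_real (p (above n j)) * d1 (above n j))
     - (\<Sum>j. jost_kernel \<zeta> (Suc j) * complex_of_real (p (above n j)) * d2 (above n j))" by (simp add: volterra_def)
  also have "\<dots> = (\<Sum>j. jost_kernel \<zeta> (Suc j) * complex_of_real (p (above n j)) * d1 (above n j)
     - jost_kernel \<zeta> (Suc j) * complex_of_real (p (above n j)) * d2 (above n j))"
    by (rule suminf_diff[OF volterra_sum_bound(1)[OF z assms(2)] volterra_sum_bound(1)[OF z assms(3)]])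
  finally show ?thesis by (simp add: algebra_simps)
qed

lemma picard_bounded: assumes z: "\<zeta> \<in> jost_domain \<delta>" shows "\<exists>B. \<forall>k. cmod (picard p \<zeta> i k) \<le> B"
proof (induction i)
  case 0 then show ?case by (intro exI[of _ 1]) (simp add: picard_0)
next
  case (Suc i)
  then obtain B where B: "\<And>k. cmod (picard p \<zeta> i k) \<le> B" by blast
  have "cmod (picard p \<zeta> (Suc i) k) \<le> 1 + kernel_bound * B * mass" for k
  proof -
    have "cmod (picard p \<zeta> (Suc i) k) \<le> cmod (1::complex) + cmod (\<Sum>j. jost_kernel \<zeta> (Suc j) * complex_of_real (p (above k j)) * picard p \<zeta> i (above k j))"
      unfolding picard_Suc volterra_def by (rule norm_triangle_ineq)
    also have "\<dots> \<le> 1 + kernel_bound * B * tail_mass k" using volterra_sum_bound(2)[OF z B, of k] by simp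
    also have "\<dots> \<le> 1 + kernel_bound * B * mass"
    proof -
      have "0 \<le> B" using B[of 0] norm_ge_zero order.trans by blast
      then show ?thesis using tail_mass_le_mass[of k] kernel_bound_pos by (simp add: mult_left_mono)
    qed
    finally show ?thesis .
  qed
  then show ?case by blast
qed

lemma norm_picard_incr_le_weighted:
  assumes z: "\<zeta> \<in> jost_domain \<delta>"
  shows "cmod (picard_incr p \<zeta> i n) \<le> (1/2)^(Suc i) * exp (2 * kernel_bound * tail_mass n)"
proof (induction i arbitrary: n)
  case 0
  have "picard_incr p \<zeta> 0 n = (\<Sum>j. jost_kernel \<zeta> (Suc j) * complex_of_real (p (above n j)) * 1)"
    by (simp add: picard_incr_def picard_Suc picard_0 volterra_def)
  also have "cmod \<dots> \<le> 1 / 2 * exp (2 * kernel_bound * tail_mass n)"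
    by (rule volterra_sum_contraction(2)[OF z, where d="\<lambda>_. 1"]) (use kernel_bound_pos in \<open>auto simp: tail_mass_nonneg\<close>)
  finally show ?case by simp
next
  case (Suc i)
  obtain B1 where B1: "\<And>k. cmod (picard p \<zeta> (Suc i) k) \<le> B1" using picard_bounded[OF z] by blast
  obtain B2 where B2: "\<And>k. cmod (picard p \<zeta> i k) \<le> B2" using picard_bounded[OF z] by blast
  have "picard_incr p \<zeta> (Suc i) n = (\<Sum>j. jost_kernel \<zeta> (Suc j) * complex_of_real (p (above n j)) * (picard_incr p \<zeta> i (above n j)))"
    unfolding picard_incr_def picard_Suc[of p \<zeta> "Suc i"] picard_Suc[of p \<zeta> i]
    using volterra_diff[OF z B1 B2, where n=n] by (simp add: picard_Suc)
  also have "cmod \<dots> \<le> (1/2)^(Suc i) / 2 * exp (2 * kernel_bound * tail_mass n)"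
    by (rule volterra_sum_contraction(2)[OF z, where d="picard_incr p \<zeta> i"]) (use Suc in auto)
  finally show ?case by simp
qed

lemma exp_tail_mass_le: "exp (2 * kernel_bound * tail_mass n) \<le> weight_bound"
  unfolding weight_bound_def using tail_mass_le_mass[of n] kernel_bound_pos by simp

lemma weight_bound_ge_1: "1 \<le> weight_bound"
  unfolding weight_bound_def using mass_nonneg kernel_bound_pos by simp

lemma norm_picard_incr_le:
  assumes z: "\<zeta> \<in> jost_domain \<delta>"
  shows "cmod (picard_incr p \<zeta> i n) \<le> weight_bound * (1/2)^(Suc i)"
proof -
  have "cmod (picard_incr p \<zeta> i n) \<le> (1/2)^(Suc i) * exp (2 * kernel_bound * tail_mass n)" by (rule norm_picard_incr_le_weighted[OF z])
  also have "\<dots> \<le> (1/2)^(Suc i) * weight_bound" by (rule mult_left_mono[OF exp_tail_mass_le]) simp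
  finally show ?thesis by (simp add: mult.commute)
qed

lemma weight_bound_geometric_sums: "(\<lambda>i. weight_bound * (1/2::real)^(Suc i)) sums weight_bound"
proof -
  have "(\<lambda>i. (1/2::real)^i) sums 2" using geometric_sums[of "1/2::real"] by simp
  then have "(\<lambda>i. weight_bound / 2 * (1/2::real)^i) sums (weight_bound / 2 * 2)" by (rule sums_mult)
  then show ?thesis by simp
qed

lemma summable_picard_incr:
  assumes z: "\<zeta> \<in> jost_domain \<delta>" shows "summable (\<lambda>i. picard_incr p \<zeta> i n)"
  by (rule summable_comparison_test[OF _ sums_summable[OF weight_bound_geometric_sums]]) (use norm_picard_incr_le[OF z] in auto)

lemma picard_eq_sum: "picard p \<zeta> i n = 1 + (\<Sum>l<i. picard_incr p \<zeta> l n)"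
  by (induction i) (simp_all add: picard_0 picard_incr_def)

lemma norm_jost_factor_le:
  assumes z: "\<zeta> \<in> jost_domain \<delta>" shows "cmod (jost_factor p \<zeta> n) \<le> 1 + weight_bound"
proof -
  have "cmod (\<Sum>i. picard_incr p \<zeta> i n) \<le> (\<Sum>i. weight_bound * (1/2)^(Suc i))"
    by (rule norm_suminf_le[OF norm_picard_incr_le[OF z] sums_summable[OF weight_bound_geometric_sums]])
  also have "\<dots> = weight_bound" using weight_bound_geometric_sums by (simp add: sums_iff)
  finally show ?thesis unfolding jost_factor_def by (metis norm_one norm_triangle_ineq order_trans add_left_mono)
qed

lemma norm_jost_factor_minus_picard:
  assumes z: "\<zeta> \<in> jost_domain \<delta>" shows "cmod (jost_factor p \<zeta> n - picard p \<zeta> i n) \<le> weight_bound * (1/2)^i"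
proof -
  have "jost_factor p \<zeta> n - picard p \<zeta> i n = (\<Sum>l. picard_incr p \<zeta> (l + i) n)"
    unfolding jost_factor_def picard_eq_sum using suminf_split_initial_segment[OF summable_picard_incr[OF z], of n i] by simp
  also have "cmod \<dots> \<le> (\<Sum>l. weight_bound * (1/2)^(Suc (l + i)))"
    by (rule norm_suminf_le[OF norm_picard_incr_le[OF z]]) (use sums_summable[OF weight_bound_geometric_sums] summable_iff_shift[of "\<lambda>i. weight_bound * (1/2::real)^(Suc i)" i] in simp)
  also have "\<dots> = (\<Sum>l. (1/2)^i * (weight_bound * (1/2)^(Suc l)))" by (simp add: power_add algebra_simps)
  also have "\<dots> = (1/2)^i * weight_bound" using sums_mult[OF weight_bound_geometric_sums, of "(1/2)^i"] by (simp add: sums_iff)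
  finally show ?thesis by (simp add: mult.commute)
qed

lemma volterra_jost_factor:
  assumes z: "\<zeta> \<in> jost_domain \<delta>" shows "volterra p \<zeta> (jost_factor p \<zeta>) n = jost_factor p \<zeta> n"
proof -
  have half: "(\<lambda>i. kernel_bound * (weight_bound * (1/2::real)^i) * tail_mass n) \<longlonglongrightarrow> 0"
    by (intro tendsto_mult_left_zero tendsto_mult_right_zero LIMSEQ_power_zero) simp
  have half0: "(\<lambda>i. weight_bound * (1/2::real)^i) \<longlonglongrightarrow> 0"
    by (intro tendsto_mult_right_zero LIMSEQ_power_zero) simp
  have l1: "(\<lambda>i. picard p \<zeta> i n) \<longlonglongrightarrow> jost_factor p \<zeta> n"
  proof (rule LIM_zero_cancel, rule Lim_null_comparison[OF _ half0])
    show "\<forall>\<^sub>F i in sequentially. norm (picard p \<zeta> i n - jost_factor p \<zeta> n) \<le> weight_bound * (1/2)^i"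
      using norm_jost_factor_minus_picard[OF z] by (simp add: norm_minus_commute)
  qed
  have l2: "(\<lambda>i. picard p \<zeta> (Suc i) n) \<longlonglongrightarrow> volterra p \<zeta> (jost_factor p \<zeta>) n"
  proof (rule LIM_zero_cancel, rule Lim_null_comparison[OF _ half])
    show "\<forall>\<^sub>F i in sequentially. norm (picard p \<zeta> (Suc i) n - volterra p \<zeta> (jost_factor p \<zeta>) n) \<le> kernel_bound * (weight_bound * (1/2)^i) * tail_mass n"
    proof (rule always_eventually, rule allI)
      fix i
      obtain B1 where B1: "\<And>k. cmod (picard p \<zeta> i k) \<le> B1" using picard_bounded[OF z] by blast
      have tb: "\<And>k. cmod (picard p \<zeta> i k - jost_factor p \<zeta> k) \<le> weight_bound * (1/2)^i"
        using norm_jost_factor_minus_picard[OF z] by (simp add: norm_minus_commute)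
      have "picard p \<zeta> (Suc i) n - volterra p \<zeta> (jost_factor p \<zeta>) n = (\<Sum>j. jost_kernel \<zeta> (Suc j) * complex_of_real (p (above n j)) * (picard p \<zeta> i (above n j) - jost_factor p \<zeta> (above n j)))"
        unfolding picard_Suc by (rule volterra_diff[OF z B1 norm_jost_factor_le[OF z]])
      also have "cmod \<dots> \<le> kernel_bound * (weight_bound * (1/2)^i) * tail_mass n"
        by (rule volterra_sum_bound(2)[OF z tb])
      finally show "norm (picard p \<zeta> (Suc i) n - volterra p \<zeta> (jost_factor p \<zeta>) n) \<le> kernel_bound * (weight_bound * (1/2)^i) * tail_mass n" .
    qed
  qed
  from LIMSEQ_unique[OF l2 LIMSEQ_Suc[OF l1]] show ?thesis .
qed

lemma norm_jost_factor_minus_1_le: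
  assumes z: "\<zeta> \<in> jost_domain \<delta>" shows "cmod (jost_factor p \<zeta> n - 1) \<le> kernel_bound * (1 + weight_bound) * tail_mass n"
proof -
  have "jost_factor p \<zeta> n - 1 = (\<Sum>j. jost_kernel \<zeta> (Suc j) * complex_of_real (p (above n j)) * jost_factor p \<zeta> (above n j))"
    using volterra_jost_factor[OF z, of n] unfolding volterra_def by (metis add_diff_cancel_left')
  also have "cmod \<dots> \<le> kernel_bound * (1 + weight_bound) * tail_mass n" by (rule volterra_sum_bound(2)[OF z norm_jost_factor_le[OF z]])
  finally show ?thesis .
qed

lemma jost_factor_tendsto_1:
  assumes z: "\<zeta> \<in> jost_domain \<delta>" shows "(\<lambda>k. jost_factor p \<zeta> (a + int k)) \<longlonglongrightarrow> 1"
proof (rule LIM_zero_cancel, rule Lim_null_comparison)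
  show "\<forall>\<^sub>F k in sequentially. norm (jost_factor p \<zeta> (a + int k) - 1) \<le> kernel_bound * (1 + weight_bound) * tail_mass (a + int k)"
    using norm_jost_factor_minus_1_le[OF z] by simp
  show "(\<lambda>k. kernel_bound * (1 + weight_bound) * tail_mass (a + int k)) \<longlonglongrightarrow> 0"
    by (intro tendsto_mult_right_zero tail_mass_tendsto_0)
qed

lemma summable_kernel_above:
  assumes c: "\<And>j. cmod (c j) \<le> kernel_bound" and d: "\<And>k. cmod (d k) \<le> B"
  shows "summable (\<lambda>j. c j * (complex_of_real (p (above n j)) * d (above n j)))"
proof (rule summable_comparison_test[OF _ summable_mult[OF summable_above, of "kernel_bound * B" n]])
  have "cmod (c j * (complex_of_real (p (above n j)) * d (above n j))) \<le> kernel_bound * B * \<bar>p (above n j)\<bar>" for j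
  proof -
    have "cmod (c j * (complex_of_real (p (above n j)) * d (above n j)))
        = cmod (c j) * (\<bar>p (above n j)\<bar> * cmod (d (above n j)))" by (simp add: norm_mult)
    also have "\<dots> \<le> kernel_bound * (\<bar>p (above n j)\<bar> * B)"
      by (intro mult_mono c mult_left_mono d) (use kernel_bound_pos in auto)
    finally show ?thesis by (simp add: algebra_simps)
  qed
  then show "\<exists>N. \<forall>j\<ge>N. cmod (c j * (complex_of_real (p (above n j)) * d (above n j))) \<le> kernel_bound * B * \<bar>p (above n j)\<bar>"
    by blast
qed

lemma jost_factor_recurrence:
  assumes z: "\<zeta> \<in> jost_domain \<delta>"
  shows "\<zeta> * jost_factor p \<zeta> (n+1) + jost_factor p \<zeta> (n-1) / \<zeta> = (\<zeta> + 1/\<zeta> + complex_of_real (p n)) * jost_factor p \<zeta> n"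
proof -
  let ?h = "jost_factor p \<zeta>"
  have hb: "\<And>k. cmod (?h k) \<le> 1 + weight_bound" by (rule norm_jost_factor_le[OF z])
  have z0: "\<zeta> \<noteq> 0" and zd: "\<zeta> - 1/\<zeta> \<noteq> 0" using z delta_pos by (auto simp: jost_domain_def)
  define A where "A j = complex_of_real (p (above n j)) * ?h (above n j)" for j
  have kernel_le: "\<And>m. cmod (jost_kernel \<zeta> m) \<le> kernel_bound" by (rule norm_jost_kernel_le[OF z])
  have s0: "summable (\<lambda>j. jost_kernel \<zeta> j * A j)"
    unfolding A_def by (rule summable_kernel_above[OF kernel_le hb])
  have s1: "summable (\<lambda>j. jost_kernel \<zeta> (Suc j) * A j)"
    unfolding A_def by (rule summable_kernel_above[OF kernel_le hb])
  have s2: "summable (\<lambda>j. jost_kernel \<zeta> (Suc (Suc j)) * A j)"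
    unfolding A_def by (rule summable_kernel_above[OF kernel_le hb])
  define S0 where "S0 = (\<Sum>j. jost_kernel \<zeta> j * A j)"
  define S1 where "S1 = (\<Sum>j. jost_kernel \<zeta> (Suc j) * A j)"
  define S2 where "S2 = (\<Sum>j. jost_kernel \<zeta> (Suc (Suc j)) * A j)"
  have hn: "?h n = 1 + S1"
    using volterra_jost_factor[OF z, of n] unfolding S1_def A_def volterra_def by (simp add: mult.assoc)
  have hn1: "?h (n+1) = 1 + S0"
  proof -
    have "?h (n+1) = 1 + (\<Sum>j. jost_kernel \<zeta> (Suc j) * A (Suc j))"
      using volterra_jost_factor[OF z, of "n+1"] unfolding A_def volterra_def above_Suc by (simp add: mult.assoc)
    also have "(\<Sum>j. jost_kernel \<zeta> (Suc j) * A (Suc j)) = S0 - jost_kernel \<zeta> 0 * A 0"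
      unfolding S0_def by (rule suminf_split_head[OF s0])
    finally show ?thesis by (simp add: jost_kernel_0)
  qed
  define Bf where "Bf j = jost_kernel \<zeta> (Suc j) * (complex_of_real (p (n + int j)) * ?h (n + int j))" for j
  have BfS: "Bf (Suc j) = jost_kernel \<zeta> (Suc (Suc j)) * A j" for j
    by (simp add: Bf_def A_def above_def add.assoc)
  have sB: "summable Bf" using s2 unfolding BfS[symmetric] by (simp add: summable_Suc_iff)
  have hm1: "?h (n-1) = 1 + (Bf 0 + S2)"
  proof -
    have "?h (n-1) = 1 + suminf Bf"
      using volterra_jost_factor[OF z, of "n-1"] unfolding Bf_def volterra_def above_pred by (simp add: mult.assoc)
    also have "suminf Bf = Bf 0 + S2"
      using suminf_split_head[OF sB] unfolding S2_def BfS by simp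
    finally show ?thesis .
  qed
  have B0: "Bf 0 / \<zeta> = complex_of_real (p n) * ?h n"
    using jost_kernel_1[OF z0 zd] z0 by (simp add: Bf_def)
  have key: "\<zeta> * S0 + S2 / \<zeta> = (\<zeta> + 1/\<zeta>) * S1"
    unfolding S0_def S1_def S2_def by (rule jost_kernel_series_recurrence[OF z0 zd s0 s1 s2])
  have "\<zeta> * ?h (n+1) + ?h (n-1) / \<zeta> = \<zeta> + 1/\<zeta> + Bf 0 / \<zeta> + (\<zeta> * S0 + S2 / \<zeta>)"
    unfolding hn1 hm1 using z0 by (simp add: field_simps)
  also have "\<dots> = \<zeta> + 1/\<zeta> + complex_of_real (p n) * ?h n + (\<zeta> + 1/\<zeta>) * S1"
    using key B0 by (simp add: algebra_simps)
  also have "\<dots> = (\<zeta> + 1/\<zeta> + complex_of_real (p n)) * ?h n"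
    unfolding hn by (simp add: algebra_simps add_divide_distrib)
  finally show ?thesis .
qed

lemma continuous_on_jost_kernel: "continuous_on (jost_domain \<delta>) (\<lambda>\<zeta>. jost_kernel \<zeta> m)"
proof -
  have "\<And>\<zeta>. \<zeta> \<in> jost_domain \<delta> \<Longrightarrow> \<zeta> \<noteq> 0 \<and> \<zeta> - 1/\<zeta> \<noteq> 0" using delta_pos by (auto simp: jost_domain_def)
  then show ?thesis unfolding jost_kernel_def by (intro continuous_intros) auto
qed

lemma norm_picard_le: assumes z: "\<zeta> \<in> jost_domain \<delta>" shows "cmod (picard p \<zeta> i n) \<le> 1 + weight_bound"
proof -
  have "cmod (\<Sum>l<i. picard_incr p \<zeta> l n) \<le> (\<Sum>l<i. weight_bound * (1/2)^(Suc l))"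
    by (rule sum_norm_le) (rule norm_picard_incr_le[OF z])
  also have "\<dots> \<le> (\<Sum>l. weight_bound * (1/2)^(Suc l))"
    by (rule sum_le_suminf[OF sums_summable[OF weight_bound_geometric_sums]]) (use weight_bound_ge_1 in auto)
  also have "\<dots> = weight_bound" by (rule sums_unique[OF weight_bound_geometric_sums, symmetric])
  finally show ?thesis unfolding picard_eq_sum by (metis norm_one norm_triangle_ineq order_trans add_left_mono)
qed

lemma continuous_on_picard: "continuous_on (jost_domain \<delta>) (\<lambda>\<zeta>. picard p \<zeta> i n)"
proof (induction i arbitrary: n)
  case 0 then show ?case by (simp add: picard_0)
next
  case (Suc i)
  define f where "f j \<zeta> = jost_kernel \<zeta> (Suc j) * complex_of_real (p (above n j)) * picard p \<zeta> i (above n j)" for j \<zeta>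
  have ul: "uniform_limit (jost_domain \<delta>) (\<lambda>N \<zeta>. \<Sum>j<N. f j \<zeta>) (\<lambda>\<zeta>. \<Sum>j. f j \<zeta>) sequentially"
  proof (rule Weierstrass_m_test)
    show "summable (\<lambda>j. kernel_bound * (1 + weight_bound) * \<bar>p (above n j)\<bar>)" by (rule summable_mult[OF summable_above])
    fix j \<zeta> assume z: "\<zeta> \<in> jost_domain \<delta>"
    have "cmod (f j \<zeta>) = cmod (jost_kernel \<zeta> (Suc j)) * (\<bar>p (above n j)\<bar> * cmod (picard p \<zeta> i (above n j)))"
      by (simp add: f_def norm_mult)
    also have "\<dots> \<le> kernel_bound * (\<bar>p (above n j)\<bar> * (1 + weight_bound))"
      by (intro mult_mono norm_jost_kernel_le z mult_left_mono norm_picard_le) (use kernel_bound_pos in auto)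
    finally show "norm (f j \<zeta>) \<le> kernel_bound * (1 + weight_bound) * \<bar>p (above n j)\<bar>" by (simp add: algebra_simps)
  qed
  have "continuous_on (jost_domain \<delta>) (\<lambda>\<zeta>. \<Sum>j. f j \<zeta>)"
  proof (rule uniform_limit_theorem[OF _ ul])
    show "\<forall>\<^sub>F N in sequentially. continuous_on (jost_domain \<delta>) (\<lambda>\<zeta>. \<Sum>j<N. f j \<zeta>)"
      unfolding f_def by (intro always_eventually allI continuous_intros continuous_on_jost_kernel Suc.IH)
  qed simp
  then have c: "continuous_on (jost_domain \<delta>) (\<lambda>\<zeta>. 1 + (\<Sum>j. f j \<zeta>))" by (intro continuous_intros)
  have eq: "(\<lambda>\<zeta>. picard p \<zeta> (Suc i) n) = (\<lambda>\<zeta>. 1 + (\<Sum>j. f j \<zeta>))"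
    by (simp add: picard_Suc volterra_def f_def)
  show ?case unfolding eq by (rule c)
qed

lemma continuous_on_jost_factor: "continuous_on (jost_domain \<delta>) (\<lambda>\<zeta>. jost_factor p \<zeta> n)"
proof -
  have ul: "uniform_limit (jost_domain \<delta>) (\<lambda>N \<zeta>. \<Sum>l<N. picard_incr p \<zeta> l n) (\<lambda>\<zeta>. \<Sum>l. picard_incr p \<zeta> l n) sequentially"
    by (rule Weierstrass_m_test[OF norm_picard_incr_le sums_summable[OF weight_bound_geometric_sums]])
  have "continuous_on (jost_domain \<delta>) (\<lambda>\<zeta>. \<Sum>l. picard_incr p \<zeta> l n)"
  proof (rule uniform_limit_theorem[OF _ ul])
    show "\<forall>\<^sub>F N in sequentially. continuous_on (jost_domain \<delta>) (\<lambda>\<zeta>. \<Sum>l<N. picard_incr p \<zeta> l n)"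
      unfolding picard_incr_def by (intro always_eventually allI continuous_intros continuous_on_picard)
  qed simp
  then show ?thesis unfolding jost_factor_def by (intro continuous_intros)
qed

end

section \<open>The Green kernel\<close>

definition jost_plus :: "(int \<Rightarrow> real) \<Rightarrow> complex \<Rightarrow> int \<Rightarrow> complex" where
  "jost_plus q \<zeta> n = \<zeta> powi n * jost_factor q \<zeta> n"

definition jost_minus :: "(int \<Rightarrow> real) \<Rightarrow> complex \<Rightarrow> int \<Rightarrow> complex" where
  "jost_minus q \<zeta> n = \<zeta> powi (-n) * jost_factor (\<lambda>k. q (-k)) \<zeta> (-n)"

definition wronskian :: "(int \<Rightarrow> complex) \<Rightarrow> (int \<Rightarrow> complex) \<Rightarrow> int \<Rightarrow> complex" where
  "wronskian u v m = u m * v (m+1) - u (m+1) * v m"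

definition jost_wronskian :: "(int \<Rightarrow> real) \<Rightarrow> complex \<Rightarrow> complex" where
  "jost_wronskian q \<zeta> = wronskian (jost_plus q \<zeta>) (jost_minus q \<zeta>) 0"

definition green_kernel :: "(int \<Rightarrow> real) \<Rightarrow> complex \<Rightarrow> int \<Rightarrow> int \<Rightarrow> complex" where
  "green_kernel q \<zeta> n m = jost_plus q \<zeta> (max n m) * jost_minus q \<zeta> (min n m) / jost_wronskian q \<zeta>"

lemma wronskian_constant:
  assumes u: "\<And>n. u (n+1) + u (n-1) = c n * u n" and v: "\<And>n. v (n+1) + v (n-1) = c n * v n"
  shows "wronskian u v m = wronskian u v 0"
proof -
  have step: "wronskian u v i = wronskian u v (i - 1)" for i
  proof -
    have "wronskian u v i - wronskian u v (i - 1) = u i * (v (i+1) + v (i-1)) - v i * (u (i+1) + u (i-1))"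
      by (simp add: wronskian_def algebra_simps)
    also have "\<dots> = 0" by (simp add: u v)
    finally show ?thesis by simp
  qed
  show ?thesis
  proof (induction m rule: int_induct[where k=0])
    case base then show ?case by simp
  next
    case (step1 i) then show ?case using step[of "i+1"] by simp
  next
    case (step2 i) then show ?case using step[of i] by simp
  qed
qed

lemma power_int_mult_neg: fixes \<zeta> :: complex assumes "\<zeta> \<noteq> 0" "m \<le> n" shows "\<zeta> powi n * \<zeta> powi (-m) = \<zeta> ^ nat (n - m)"
proof -
  have "\<zeta> powi n * \<zeta> powi (-m) = \<zeta> powi (n + - m)" using power_int_add[of \<zeta> n "-m"] assms by simp
  also have "n + - m = int (nat (n - m))" using assms by simp
  finally show ?thesis by (simp only: power_int_of_nat)
qed

locale jost_pair = P: summable_potential q \<delta> for q :: "int \<Rightarrow> real" and \<delta> :: real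
begin

lemma summable_abs_reflected: "(\<lambda>n. \<bar>q (-n)\<bar>) summable_on UNIV"
proof -
  have "inj (uminus :: int \<Rightarrow> int)" by simp
  then have "(\<lambda>n. \<bar>q n\<bar>) summable_on range uminus \<longleftrightarrow> ((\<lambda>n. \<bar>q n\<bar>) \<circ> uminus) summable_on UNIV"
    by (rule summable_on_reindex)
  moreover have "range (uminus :: int \<Rightarrow> int) = UNIV" by (metis surj_def minus_minus)
  ultimately show ?thesis using P.summable_abs by (simp add: o_def)
qed

sublocale R: summable_potential "\<lambda>k. q (-k)" \<delta>
  by unfold_locales (rule summable_abs_reflected, rule P.delta_pos)

lemma jost_plus_recurrence:
  assumes z: "\<zeta> \<in> jost_domain \<delta>"
  shows "jost_plus q \<zeta> (n+1) + jost_plus q \<zeta> (n-1) = (\<zeta> + 1/\<zeta> + complex_of_real (q n)) * jost_plus q \<zeta> n"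
proof -
  have z0: "\<zeta> \<noteq> 0" by (rule jost_domain_nonzero[OF z])
  have a: "\<zeta> powi (n+1) = \<zeta> powi n * \<zeta>" using power_int_add[of \<zeta> n 1] z0 by simp
  have b: "\<zeta> powi (n-1) = \<zeta> powi n / \<zeta>" using power_int_diff[of \<zeta> n 1] z0 by simp
  have "jost_plus q \<zeta> (n+1) + jost_plus q \<zeta> (n-1) = \<zeta> powi n * (\<zeta> * jost_factor q \<zeta> (n+1) + jost_factor q \<zeta> (n-1) / \<zeta>)"
    unfolding jost_plus_def a b by (simp add: algebra_simps)
  also have "\<dots> = \<zeta> powi n * ((\<zeta> + 1/\<zeta> + complex_of_real (q n)) * jost_factor q \<zeta> n)"
    by (simp only: P.jost_factor_recurrence[OF z])
  finally show ?thesis by (simp add: jost_plus_def algebra_simps)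
qed

lemma jost_minus_recurrence:
  assumes z: "\<zeta> \<in> jost_domain \<delta>"
  shows "jost_minus q \<zeta> (n+1) + jost_minus q \<zeta> (n-1) = (\<zeta> + 1/\<zeta> + complex_of_real (q n)) * jost_minus q \<zeta> n"
proof -
  have z0: "\<zeta> \<noteq> 0" by (rule jost_domain_nonzero[OF z])
  let ?j = "jost_factor (\<lambda>k. q (-k)) \<zeta>"
  have a: "\<zeta> powi ((-n) - 1) = \<zeta> powi (-n) / \<zeta>" using power_int_diff[of \<zeta> "-n" 1] z0 by simp
  have b: "\<zeta> powi ((-n) + 1) = \<zeta> powi (-n) * \<zeta>" using power_int_add[of \<zeta> "-n" 1] z0 by simp
  have e1: "-(n+1) = (-n) - 1" and e2: "-(n-1) = (-n) + 1" by simp_all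
  have f1: "jost_minus q \<zeta> (n+1) = \<zeta> powi (-n) / \<zeta> * ?j ((-n) - 1)" unfolding jost_minus_def e1 a ..
  have f2: "jost_minus q \<zeta> (n-1) = \<zeta> powi (-n) * \<zeta> * ?j ((-n) + 1)" unfolding jost_minus_def e2 b ..
  have "jost_minus q \<zeta> (n+1) + jost_minus q \<zeta> (n-1) = \<zeta> powi (-n) * (\<zeta> * ?j ((-n)+1) + ?j ((-n)-1) / \<zeta>)"
    unfolding f1 f2 by (simp add: algebra_simps)
  also have "\<dots> = \<zeta> powi (-n) * ((\<zeta> + 1/\<zeta> + complex_of_real (q (-(-n)))) * ?j (-n))"
    by (simp only: R.jost_factor_recurrence[OF z])
  finally show ?thesis by (simp add: jost_minus_def algebra_simps)
qed

lemma wronskian_jost_constant: assumes z: "\<zeta> \<in> jost_domain \<delta>" shows "wronskian (jost_plus q \<zeta>) (jost_minus q \<zeta>) m = jost_wronskian q \<zeta>"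
  unfolding jost_wronskian_def by (rule wronskian_constant[OF jost_plus_recurrence[OF z] jost_minus_recurrence[OF z]])

lemma green_kernel_equation:
  assumes z: "\<zeta> \<in> jost_domain \<delta>" and W: "jost_wronskian q \<zeta> \<noteq> 0"
  shows "(\<zeta> + 1/\<zeta> + complex_of_real (q n)) * green_kernel q \<zeta> n m - green_kernel q \<zeta> (n+1) m - green_kernel q \<zeta> (n-1) m
         = (if n = m then 1 else 0)"
proof -
  let ?c = "\<zeta> + 1/\<zeta> + complex_of_real (q n)"
  let ?F = "jost_plus q \<zeta>" and ?M = "jost_minus q \<zeta>" and ?W = "jost_wronskian q \<zeta>"
  consider "m < n" | "n < m" | "n = m" by linarith
  then show ?thesis
  proof cases
    case 1
    then have "max (n-1) m = n-1" "min (n-1) m = m" by simp_all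
    with 1 have "green_kernel q \<zeta> n m = ?F n * ?M m / ?W" "green_kernel q \<zeta> (n+1) m = ?F (n+1) * ?M m / ?W"
      "green_kernel q \<zeta> (n-1) m = ?F (n-1) * ?M m / ?W" by (simp_all add: green_kernel_def max_def min_def)
    then have "?c * green_kernel q \<zeta> n m - green_kernel q \<zeta> (n+1) m - green_kernel q \<zeta> (n-1) m = ?M m * (?c * ?F n - (?F (n+1) + ?F (n-1))) / ?W"
      using W by (simp add: field_simps)
    also have "\<dots> = 0" by (simp add: jost_plus_recurrence[OF z])
    finally show ?thesis using 1 by simp
  next
    case 2
    then have "max (n+1) m = m" "min (n+1) m = n+1" by simp_all
    with 2 have "green_kernel q \<zeta> n m = ?F m * ?M n / ?W" "green_kernel q \<zeta> (n+1) m = ?F m * ?M (n+1) / ?W"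
      "green_kernel q \<zeta> (n-1) m = ?F m * ?M (n-1) / ?W" by (simp_all add: green_kernel_def max_def min_def)
    then have "?c * green_kernel q \<zeta> n m - green_kernel q \<zeta> (n+1) m - green_kernel q \<zeta> (n-1) m = ?F m * (?c * ?M n - (?M (n+1) + ?M (n-1))) / ?W"
      using W by (simp add: field_simps)
    also have "\<dots> = 0" by (simp add: jost_minus_recurrence[OF z])
    finally show ?thesis using 2 by simp
  next
    case 3
    then have "green_kernel q \<zeta> n m = ?F n * ?M n / ?W" "green_kernel q \<zeta> (n+1) m = ?F (n+1) * ?M n / ?W"
      "green_kernel q \<zeta> (n-1) m = ?F n * ?M (n-1) / ?W" by (simp_all add: green_kernel_def max_def min_def)
    then have "?c * green_kernel q \<zeta> n m - green_kernel q \<zeta> (n+1) m - green_kernel q \<zeta> (n-1) m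
        = (?F n * (?c * ?M n - ?M (n-1)) - ?F (n+1) * ?M n) / ?W"
      using W by (simp add: field_simps)
    also have "?c * ?M n - ?M (n-1) = ?M (n+1)" using jost_minus_recurrence[OF z, of n] by (simp add: algebra_simps)
    also have "?F n * ?M (n+1) - ?F (n+1) * ?M n = ?W" using wronskian_jost_constant[OF z, of n] by (simp add: wronskian_def)
    finally show ?thesis using 3 W by simp
  qed
qed

lemma norm_green_kernel_le:
  assumes z: "\<zeta> \<in> jost_domain \<delta>"
  shows "cmod (green_kernel q \<zeta> n m) \<le> (1 + P.weight_bound) * (1 + R.weight_bound) / cmod (jost_wronskian q \<zeta>) * cmod \<zeta> ^ nat \<bar>n - m\<bar>"
proof -
  have z0: "\<zeta> \<noteq> 0" by (rule jost_domain_nonzero[OF z])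
  let ?a = "max n m" and ?b = "min n m"
  have "jost_plus q \<zeta> ?a * jost_minus q \<zeta> ?b = (\<zeta> powi ?a * \<zeta> powi (-?b)) * (jost_factor q \<zeta> ?a * jost_factor (\<lambda>k. q (-k)) \<zeta> (-?b))"
    by (simp add: jost_plus_def jost_minus_def algebra_simps)
  also have "\<zeta> powi ?a * \<zeta> powi (-?b) = \<zeta> ^ nat \<bar>n - m\<bar>"
  proof -
    have "nat (?a - ?b) = nat \<bar>n - m\<bar>" by (simp add: max_def min_def)
    then show ?thesis using power_int_mult_neg[OF z0, of ?b ?a] by simp
  qed
  finally have e: "jost_plus q \<zeta> ?a * jost_minus q \<zeta> ?b = \<zeta> ^ nat \<bar>n - m\<bar> * (jost_factor q \<zeta> ?a * jost_factor (\<lambda>k. q (-k)) \<zeta> (-?b))" .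
  have "cmod (jost_plus q \<zeta> ?a * jost_minus q \<zeta> ?b) \<le> cmod \<zeta> ^ nat \<bar>n - m\<bar> * ((1 + P.weight_bound) * (1 + R.weight_bound))"
    unfolding e norm_mult norm_power
    by (intro mult_left_mono mult_mono P.norm_jost_factor_le[OF z] R.norm_jost_factor_le[OF z]) (use P.weight_bound_ge_1 in auto)
  then show ?thesis unfolding green_kernel_def norm_divide
    by (simp add: divide_right_mono field_simps)
qed

end

lemma wronskian_plucker:
  fixes a b c d :: "int \<Rightarrow> complex"
  shows "wronskian a b m * wronskian c d m - wronskian a c m * wronskian b d m + wronskian a d m * wronskian b c m = 0"
  unfolding wronskian_def by algebra

lemma cnj_solution:
  assumes "\<And>n. u (n+1) + u (n-1) = c n * u n" and "\<And>n. cnj (c n) = c n"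
  shows "cnj (u (n+1)) + cnj (u (n-1)) = c n * cnj (u n)"
proof -
  have "cnj (u (n+1) + u (n-1)) = cnj (c n * u n)" by (simp only: assms(1))
  then show ?thesis by (simp add: assms(2))
qed

lemma unimodular_inverse:
  assumes "cmod \<zeta> = 1" shows "1 / \<zeta> = cnj \<zeta>"
proof -
  have "\<zeta> * cnj \<zeta> = 1" using complex_norm_square[of \<zeta>] assms by simp
  moreover have "\<zeta> \<noteq> 0" using assms by auto
  ultimately show ?thesis by (simp add: field_simps)
qed

lemma unimodular_power_int_cnj: "cmod \<zeta> = 1 \<Longrightarrow> \<zeta> powi m * cnj (\<zeta> powi m) = 1"
  using complex_norm_square[of "\<zeta> powi m"] by (simp add: norm_power_int)

context jost_pair
begin

text \<open>On the unit circle the recursion coefficient \<open>\<zeta> + 1/\<zeta> + q n\<close> is real, so conjugates of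
  solutions are solutions; their Wronskians with the Jost solutions are read off at \<open>\<plusminus>\<infinity>\<close>.\<close>

lemma wronskian_jost_plus_cnj:
  assumes z: "\<zeta> \<in> jost_domain \<delta>" and u1: "cmod \<zeta> = 1"
  shows "wronskian (jost_plus q \<zeta>) (\<lambda>n. cnj (jost_plus q \<zeta> n)) 0 = cnj \<zeta> - \<zeta>"
proof -
  let ?F = "jost_plus q \<zeta>" and ?J = "jost_factor q \<zeta>"
  have z0: "\<zeta> \<noteq> 0" by (rule jost_domain_nonzero[OF z])
  have real: "cnj (\<zeta> + 1/\<zeta> + complex_of_real (q n)) = \<zeta> + 1/\<zeta> + complex_of_real (q n)" for n
    using unimodular_inverse[OF u1] by simp
  have W: "wronskian ?F (\<lambda>n. cnj (?F n)) m = cnj \<zeta> * ?J m * cnj (?J (m+1)) - \<zeta> * ?J (m+1) * cnj (?J m)" for m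
  proof -
    define u where "u = \<zeta> powi m"
    have uu: "u * cnj u = 1" unfolding u_def by (rule unimodular_power_int_cnj[OF u1])
    have f1: "?F (m+1) = u * \<zeta> * ?J (m+1)"
      using power_int_add[of \<zeta> m 1] z0 by (simp add: jost_plus_def u_def)
    have "wronskian ?F (\<lambda>n. cnj (?F n)) m = (u * cnj u) * (cnj \<zeta> * ?J m * cnj (?J (m+1))) - (u * cnj u) * (\<zeta> * ?J (m+1) * cnj (?J m))"
      unfolding wronskian_def f1 by (simp add: jost_plus_def u_def algebra_simps)
    then show ?thesis using uu by simp
  qed
  have const: "wronskian ?F (\<lambda>n. cnj (?F n)) (int k) = wronskian ?F (\<lambda>n. cnj (?F n)) 0" for k
    by (rule wronskian_constant[OF jost_plus_recurrence[OF z] cnj_solution[OF jost_plus_recurrence[OF z] real]])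
  have "(\<lambda>k. cnj \<zeta> * ?J (0 + int k) * cnj (?J (1 + int k)) - \<zeta> * ?J (1 + int k) * cnj (?J (0 + int k)))
      \<longlonglongrightarrow> cnj \<zeta> * 1 * cnj 1 - \<zeta> * 1 * cnj 1"
    by (intro tendsto_intros P.jost_factor_tendsto_1[OF z])
  moreover have "(\<lambda>k. cnj \<zeta> * ?J (0 + int k) * cnj (?J (1 + int k)) - \<zeta> * ?J (1 + int k) * cnj (?J (0 + int k)))
      = (\<lambda>k. wronskian ?F (\<lambda>n. cnj (?F n)) 0)"
    using W const by (simp add: add.commute)
  ultimately show ?thesis using LIMSEQ_const_iff by fastforce
qed

lemma wronskian_jost_minus_cnj:
  assumes z: "\<zeta> \<in> jost_domain \<delta>" and u1: "cmod \<zeta> = 1"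
  shows "wronskian (jost_minus q \<zeta>) (\<lambda>n. cnj (jost_minus q \<zeta> n)) 0 = \<zeta> - cnj \<zeta>"
proof -
  let ?M = "jost_minus q \<zeta>" and ?J = "jost_factor (\<lambda>k. q (-k)) \<zeta>"
  have z0: "\<zeta> \<noteq> 0" by (rule jost_domain_nonzero[OF z])
  have real: "cnj (\<zeta> + 1/\<zeta> + complex_of_real (q n)) = \<zeta> + 1/\<zeta> + complex_of_real (q n)" for n
    using unimodular_inverse[OF u1] by simp
  have W: "wronskian ?M (\<lambda>n. cnj (?M n)) m = \<zeta> * ?J (-m) * cnj (?J (-m-1)) - cnj \<zeta> * ?J (-m-1) * cnj (?J (-m))" for m
  proof -
    define v where "v = \<zeta> powi (-m)"
    have vv: "v * cnj v = 1" unfolding v_def by (rule unimodular_power_int_cnj[OF u1])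
    have pw: "\<zeta> powi (-m - 1) = \<zeta> powi (-m) / \<zeta>" using power_int_diff[of \<zeta> "-m" 1] z0 by simp
    have e: "-(m+1) = -m - 1" by simp
    have f1: "?M (m+1) = v * cnj \<zeta> * ?J (-m-1)"
      unfolding jost_minus_def e pw v_def unimodular_inverse[OF u1, symmetric] by (simp add: divide_inverse)
    have "wronskian ?M (\<lambda>n. cnj (?M n)) m = (v * cnj v) * (\<zeta> * ?J (-m) * cnj (?J (-m-1)))
        - (v * cnj v) * (cnj \<zeta> * ?J (-m-1) * cnj (?J (-m)))"
      unfolding wronskian_def f1 by (simp add: jost_minus_def v_def algebra_simps)
    then show ?thesis using vv u1 complex_norm_square[of \<zeta>] by simp
  qed
  have const: "wronskian ?M (\<lambda>n. cnj (?M n)) (- int k) = wronskian ?M (\<lambda>n. cnj (?M n)) 0" for k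
    by (rule wronskian_constant[OF jost_minus_recurrence[OF z] cnj_solution[OF jost_minus_recurrence[OF z] real]])
  have "(\<lambda>k. \<zeta> * ?J (0 + int k) * cnj (?J (-1 + int k)) - cnj \<zeta> * ?J (-1 + int k) * cnj (?J (0 + int k)))
      \<longlonglongrightarrow> \<zeta> * 1 * cnj 1 - cnj \<zeta> * 1 * cnj 1"
    by (intro tendsto_intros R.jost_factor_tendsto_1[OF z])
  moreover have "(\<lambda>k. \<zeta> * ?J (0 + int k) * cnj (?J (-1 + int k)) - cnj \<zeta> * ?J (-1 + int k) * cnj (?J (0 + int k)))
      = (\<lambda>k. wronskian ?M (\<lambda>n. cnj (?M n)) 0)"
  proof
    fix k
    have "- (- int k) - 1 = -1 + int k" by simp
    then show "\<zeta> * ?J (0 + int k) * cnj (?J (-1 + int k)) - cnj \<zeta> * ?J (-1 + int k) * cnj (?J (0 + int k))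
        = wronskian ?M (\<lambda>n. cnj (?M n)) 0"
      using W[of "- int k"] const[of k] by simp
  qed
  ultimately show ?thesis using LIMSEQ_const_iff by fastforce
qed

text \<open>Pluecker's identity for the four solutions \<open>f\<^sub>+, f\<^sub>-\<close> and their conjugates turns
  \<open>W(f\<^sub>+, f\<^sub>-) = 0\<close> into \<open>4 (Im \<zeta>)\<^sup>2 + \<bar>W(f\<^sub>+, conj f\<^sub>-)\<bar>\<^sup>2 = 0\<close>, which forces \<open>\<zeta> = \<plusminus>1\<close>.\<close>

lemma jost_wronskian_nonzero:
  assumes z: "\<zeta> \<in> jost_domain \<delta>" and u1: "cmod \<zeta> = 1"
  shows "jost_wronskian q \<zeta> \<noteq> 0"
proof
  assume W0: "jost_wronskian q \<zeta> = 0"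
  let ?F = "jost_plus q \<zeta>" and ?M = "jost_minus q \<zeta>"
  let ?cF = "\<lambda>n. cnj (?F n)" and ?cM = "\<lambda>n. cnj (?M n)"
  define X where "X = wronskian ?F ?cM 0"
  have "wronskian ?F ?cF 0 * wronskian ?M ?cM 0 - wronskian ?F ?M 0 * wronskian ?cF ?cM 0
      + wronskian ?F ?cM 0 * wronskian ?cF ?M 0 = 0"
    by (rule wronskian_plucker)
  moreover have "wronskian ?F ?M 0 = 0" using W0 by (simp add: jost_wronskian_def)
  moreover have "wronskian ?cF ?M 0 = cnj X" by (simp add: wronskian_def X_def)
  ultimately have "(cnj \<zeta> - \<zeta>) * (\<zeta> - cnj \<zeta>) + X * cnj X = 0"
    unfolding wronskian_jost_plus_cnj[OF z u1] wronskian_jost_minus_cnj[OF z u1] X_def by simp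
  moreover have "(cnj \<zeta> - \<zeta>) * (\<zeta> - cnj \<zeta>) = complex_of_real (4 * (Im \<zeta>)\<^sup>2)"
    by (simp add: complex_eq_iff power2_eq_square)
  moreover have "X * cnj X = complex_of_real ((cmod X)\<^sup>2)" by (rule complex_norm_square[symmetric])
  ultimately have "4 * (Im \<zeta>)\<^sup>2 + (cmod X)\<^sup>2 = 0"
    by (metis of_real_add of_real_eq_0_iff)
  then have "Im \<zeta> = 0" by (smt (verit) zero_le_power2 power2_eq_square mult_eq_0_iff)
  then have "\<zeta> - 1/\<zeta> = 0" unfolding unimodular_inverse[OF u1] complex_diff_cnj by simp
  then show False using z P.delta_pos by (simp add: jost_domain_def)
qed

end
section \<open>Weighted spaces and kernel operators\<close>

abbreviation poly_weight :: "real \<Rightarrow> int \<Rightarrow> real" where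
  "poly_weight s n \<equiv> (1 + real_of_int \<bar>n\<bar>) powr (2 * s)"

lemma poly_weight_inverse: "poly_weight (-s) n * poly_weight s n = 1"
proof -
  have "poly_weight (-s) n * poly_weight s n = (1 + real_of_int \<bar>n\<bar>) powr (2 * (-s) + 2 * s)"
    by (rule powr_add[symmetric])
  also have "\<dots> = 1" by (simp add: add_pos_nonneg)
  finally show ?thesis .
qed

lemma summable_on_poly_weight: assumes "\<sigma> > 1/2" shows "poly_weight (-\<sigma>) summable_on UNIV"
proof -
  have s: "summable (\<lambda>n::nat. real n powr (2 * - \<sigma>))" using assms by (simp add: summable_real_powr_iff)
  have s1: "summable (\<lambda>n::nat. real (n + 1) powr (2 * - \<sigma>))"
    using summable_iff_shift[where f="\<lambda>n::nat. real n powr (2 * - \<sigma>)" and k=1] s by simp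
  have e1: "(\<lambda>n::nat. poly_weight (-\<sigma>) (int n)) = (\<lambda>n::nat. real (n + 1) powr (2 * - \<sigma>))"
    by (simp add: add.commute)
  have e2: "(\<lambda>n::nat. poly_weight (-\<sigma>) (- int n)) = (\<lambda>n::nat. real (n + 1) powr (2 * - \<sigma>))"
    by (simp add: add.commute)
  show ?thesis by (rule summable_on_int_from_nat) (use s1 e1 e2 in auto)
qed

lemma weighted_Cauchy_Schwarz:
  fixes f :: "int \<Rightarrow> complex" and A :: "int \<Rightarrow> real"
  assumes f: "l2w \<sigma> f" and A: "(\<lambda>m. poly_weight (-\<sigma>) m * (A m)\<^sup>2) summable_on UNIV" and An: "\<And>m. A m \<ge> 0"
  shows "(\<lambda>m. A m * cmod (f m)) summable_on UNIV"
    "infsum (\<lambda>m. A m * cmod (f m)) UNIV \<le> sqrt (infsum (\<lambda>m. poly_weight (-\<sigma>) m * (A m)\<^sup>2) UNIV) * wnorm \<sigma> f"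
proof -
  define a where "a m = sqrt (poly_weight (-\<sigma>) m) * A m" for m
  define b where "b m = sqrt (poly_weight \<sigma> m) * cmod (f m)" for m
  have a2: "(\<lambda>m. (a m)\<^sup>2) = (\<lambda>m. poly_weight (-\<sigma>) m * (A m)\<^sup>2)" by (simp add: a_def power_mult_distrib)
  have b2: "(\<lambda>m. (b m)\<^sup>2) = (\<lambda>m. poly_weight \<sigma> m * (cmod (f m))\<^sup>2)" by (simp add: b_def power_mult_distrib)
  have ab: "(\<lambda>m. a m * b m) = (\<lambda>m. A m * cmod (f m))"
  proof
    fix m
    have "a m * b m = (sqrt (poly_weight (-\<sigma>) m) * sqrt (poly_weight \<sigma> m)) * (A m * cmod (f m))"
      by (simp add: a_def b_def algebra_simps)
    also have "sqrt (poly_weight (-\<sigma>) m) * sqrt (poly_weight \<sigma> m) = 1"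
      by (simp only: real_sqrt_mult[symmetric] poly_weight_inverse real_sqrt_one)
    finally show "a m * b m = A m * cmod (f m)" by simp
  qed
  have sa: "(\<lambda>m. (a m)\<^sup>2) summable_on UNIV" unfolding a2 by (rule A)
  have sb: "(\<lambda>m. (b m)\<^sup>2) summable_on UNIV" unfolding b2 using f by (simp add: l2w_def)
  have an: "\<And>m. a m \<ge> 0" using An by (simp add: a_def)
  have bn: "\<And>m. b m \<ge> 0" by (simp add: b_def)
  show "(\<lambda>m. A m * cmod (f m)) summable_on UNIV" using infsum_Cauchy_Schwarz(1)[OF sa sb an bn] unfolding ab .
  show "infsum (\<lambda>m. A m * cmod (f m)) UNIV \<le> sqrt (infsum (\<lambda>m. poly_weight (-\<sigma>) m * (A m)\<^sup>2) UNIV) * wnorm \<sigma> f"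
    using infsum_Cauchy_Schwarz(2)[OF sa sb an bn] unfolding ab a2 b2 wnorm_def .
qed

lemma l2w_summable_norm:
  fixes f :: "int \<Rightarrow> complex"
  assumes "\<sigma> > 1/2" "l2w \<sigma> f"
  shows "(\<lambda>m. cmod (f m)) summable_on UNIV"
  using weighted_Cauchy_Schwarz(1)[OF assms(2), of "\<lambda>_. 1"] summable_on_poly_weight[OF assms(1)] by simp

definition hs_row :: "real \<Rightarrow> (int \<Rightarrow> int \<Rightarrow> complex) \<Rightarrow> int \<Rightarrow> real" where
  "hs_row \<sigma> K n = infsum (\<lambda>m. poly_weight (-\<sigma>) m * (cmod (K n m))\<^sup>2) UNIV"

definition hs_norm_sq :: "real \<Rightarrow> (int \<Rightarrow> int \<Rightarrow> complex) \<Rightarrow> real" where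
  "hs_norm_sq \<sigma> K = infsum (\<lambda>n. poly_weight (-\<sigma>) n * hs_row \<sigma> K n) UNIV"

definition kernel_apply :: "(int \<Rightarrow> int \<Rightarrow> complex) \<Rightarrow> (int \<Rightarrow> complex) \<Rightarrow> int \<Rightarrow> complex" where
  "kernel_apply K f n = infsum (\<lambda>m. K n m * f m) UNIV"

lemma hs_row_nonneg: "0 \<le> hs_row \<sigma> K n"
  unfolding hs_row_def by (rule infsum_nonneg) simp

lemma weighted_sq_le_bound:
  assumes "cmod z \<le> C"
  shows "poly_weight (-\<sigma>) m * (cmod z)\<^sup>2 \<le> C\<^sup>2 * poly_weight (-\<sigma>) m"
  using mult_left_mono[OF power_mono[OF assms norm_ge_zero, of 2], of "poly_weight (-\<sigma>) m"]
  by (simp add: mult.commute)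

lemma hs_row_summable_le:
  assumes s: "\<sigma> > 1/2" and K: "\<And>m. cmod (K n m) \<le> C"
  shows "(\<lambda>m. poly_weight (-\<sigma>) m * (cmod (K n m))\<^sup>2) summable_on UNIV"
    "hs_row \<sigma> K n \<le> C\<^sup>2 * infsum (poly_weight (-\<sigma>)) UNIV"
proof -
  have vs: "poly_weight (-\<sigma>) summable_on UNIV" by (rule summable_on_poly_weight[OF s])
  have le: "poly_weight (-\<sigma>) m * (cmod (K n m))\<^sup>2 \<le> C\<^sup>2 * poly_weight (-\<sigma>) m" for m
    by (rule weighted_sq_le_bound[OF K])
  show sm: "(\<lambda>m. poly_weight (-\<sigma>) m * (cmod (K n m))\<^sup>2) summable_on UNIV"
    by (rule summable_on_comparison_test[OF summable_on_cmult_right[OF vs] le]) simp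
  have "hs_row \<sigma> K n \<le> infsum (\<lambda>m. C\<^sup>2 * poly_weight (-\<sigma>) m) UNIV"
    unfolding hs_row_def by (rule infsum_mono[OF sm summable_on_cmult_right[OF vs] le])
  also have "\<dots> = C\<^sup>2 * infsum (poly_weight (-\<sigma>)) UNIV"
    by (rule infsum_cmult_right) (use vs in simp)
  finally show "hs_row \<sigma> K n \<le> C\<^sup>2 * infsum (poly_weight (-\<sigma>)) UNIV" .
qed

lemma summable_kernel_apply:
  assumes "\<sigma> > 1/2" "l2w \<sigma> f" "\<And>n m. cmod (K n m) \<le> C"
  shows "(\<lambda>m. K n m * f m) summable_on UNIV"
proof -
  have l1: "(\<lambda>m. cmod (f m)) summable_on UNIV" by (rule l2w_summable_norm[OF assms(1,2)])
  have "(\<lambda>m. norm (K n m * f m)) summable_on UNIV"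
    by (rule summable_on_comparison_test[OF summable_on_cmult_right[OF l1, of C]])
      (simp_all add: norm_mult mult_right_mono[OF assms(3)])
  then show ?thesis by (rule abs_summable_summable)
qed

lemma norm_kernel_apply_le:
  assumes s: "\<sigma> > 1/2" and f: "l2w \<sigma> f" and K: "\<And>n m. cmod (K n m) \<le> C"
  shows "cmod (kernel_apply K f n) \<le> sqrt (hs_row \<sigma> K n) * wnorm \<sigma> f"
proof -
  have sm: "(\<lambda>m. K n m * f m) summable_on UNIV" by (rule summable_kernel_apply[OF s f K])
  have "cmod (kernel_apply K f n) \<le> infsum (\<lambda>m. norm (K n m * f m)) UNIV"
    unfolding kernel_apply_def
    by (rule norm_infsum_bound[OF summable_on_iff_abs_summable_on_complex[THEN iffD1, OF sm]])
  also have "\<dots> = infsum (\<lambda>m. cmod (K n m) * cmod (f m)) UNIV" by (simp add: norm_mult)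
  also have "\<dots> \<le> sqrt (hs_row \<sigma> K n) * wnorm \<sigma> f" unfolding hs_row_def
    by (rule weighted_Cauchy_Schwarz(2)[OF f hs_row_summable_le(1)[OF s K]]) simp
  finally show ?thesis .
qed

lemma kernel_apply_hs_bound:
  assumes s: "\<sigma> > 1/2" and f: "l2w \<sigma> f" and K: "\<And>n m. cmod (K n m) \<le> C"
  shows "l2w (-\<sigma>) (kernel_apply K f)" "wnorm (-\<sigma>) (kernel_apply K f) \<le> sqrt (hs_norm_sq \<sigma> K) * wnorm \<sigma> f"
proof -
  define W where "W = wnorm \<sigma> f"
  have W0: "0 \<le> W" unfolding W_def wnorm_def by (simp add: infsum_nonneg)
  have vs: "poly_weight (-\<sigma>) summable_on UNIV" by (rule summable_on_poly_weight[OF s])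
  have srow: "(\<lambda>n. poly_weight (-\<sigma>) n * hs_row \<sigma> K n) summable_on UNIV"
  proof (rule summable_on_comparison_test[OF summable_on_cmult_right[OF vs]])
    fix n
    show "poly_weight (-\<sigma>) n * hs_row \<sigma> K n \<le> C\<^sup>2 * infsum (poly_weight (-\<sigma>)) UNIV * poly_weight (-\<sigma>) n"
      using mult_left_mono[OF hs_row_summable_le(2)[OF s K], of "poly_weight (-\<sigma>) n"]
      by (simp add: ac_simps)
  qed (simp add: hs_row_nonneg)
  have pt: "poly_weight (-\<sigma>) n * (cmod (kernel_apply K f n))\<^sup>2 \<le> W\<^sup>2 * (poly_weight (-\<sigma>) n * hs_row \<sigma> K n)" for n
  proof -
    have "(cmod (kernel_apply K f n))\<^sup>2 \<le> (sqrt (hs_row \<sigma> K n) * W)\<^sup>2"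
      unfolding W_def by (rule power_mono[OF norm_kernel_apply_le[OF s f K]]) simp
    also have "\<dots> = hs_row \<sigma> K n * W\<^sup>2" by (simp add: power_mult_distrib hs_row_nonneg)
    finally have "poly_weight (-\<sigma>) n * (cmod (kernel_apply K f n))\<^sup>2 \<le> poly_weight (-\<sigma>) n * (hs_row \<sigma> K n * W\<^sup>2)"
      by (rule mult_left_mono) simp
    then show ?thesis by (simp add: ac_simps)
  qed
  have sk: "(\<lambda>n. poly_weight (-\<sigma>) n * (cmod (kernel_apply K f n))\<^sup>2) summable_on UNIV"
    by (rule summable_on_comparison_test[OF summable_on_cmult_right[OF srow] pt]) simp
  then show "l2w (-\<sigma>) (kernel_apply K f)" by (simp add: l2w_def)
  have "infsum (\<lambda>n. poly_weight (-\<sigma>) n * (cmod (kernel_apply K f n))\<^sup>2) UNIV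
      \<le> infsum (\<lambda>n. W\<^sup>2 * (poly_weight (-\<sigma>) n * hs_row \<sigma> K n)) UNIV"
    by (rule infsum_mono[OF sk summable_on_cmult_right[OF srow] pt])
  also have "\<dots> = W\<^sup>2 * hs_norm_sq \<sigma> K"
    unfolding hs_norm_sq_def by (rule infsum_cmult_right) (use srow in simp)
  finally have "wnorm (-\<sigma>) (kernel_apply K f) \<le> sqrt (W\<^sup>2 * hs_norm_sq \<sigma> K)" unfolding wnorm_def by simp
  also have "\<dots> = sqrt (hs_norm_sq \<sigma> K) * W" using W0 by (simp add: real_sqrt_mult)
  finally show "wnorm (-\<sigma>) (kernel_apply K f) \<le> sqrt (hs_norm_sq \<sigma> K) * wnorm \<sigma> f" unfolding W_def .
qed

lemma hs_norm_sq_tendsto_0: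
  assumes s: "\<sigma> > 1/2"
    and bounded: "\<forall>\<^sub>F x in F. \<forall>n m. cmod (K x n m) \<le> C"
    and lim: "\<And>n m. ((\<lambda>x. K x n m) \<longlongrightarrow> 0) F"
  shows "((\<lambda>x. hs_norm_sq \<sigma> (K x)) \<longlongrightarrow> 0) F"
proof -
  have vs: "poly_weight (-\<sigma>) summable_on UNIV" by (rule summable_on_poly_weight[OF s])
  define V where "V = infsum (poly_weight (-\<sigma>)) UNIV"
  have sq_lim: "((\<lambda>x. (cmod (K x n m))\<^sup>2) \<longlongrightarrow> 0) F" for n m
    using tendsto_power[OF tendsto_norm[OF lim[of n m]], of 2] by simp
  have sq_dom: "\<forall>\<^sub>F x in F. \<forall>m. 0 \<le> (cmod (K x n m))\<^sup>2 \<and> (cmod (K x n m))\<^sup>2 \<le> C\<^sup>2" for n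
    using bounded by eventually_elim (simp add: power_mono)
  have row_lim: "((\<lambda>x. hs_row \<sigma> (K x) n) \<longlongrightarrow> 0) F" for n
    unfolding hs_row_def by (rule infsum_tendsto_0_dominated[OF vs _ sq_dom sq_lim]) simp
  have row_dom: "\<forall>\<^sub>F x in F. \<forall>n. 0 \<le> hs_row \<sigma> (K x) n \<and> hs_row \<sigma> (K x) n \<le> C\<^sup>2 * V"
    using bounded by eventually_elim (use hs_row_summable_le(2)[OF s] in \<open>simp add: hs_row_nonneg V_def\<close>)
  show ?thesis
    unfolding hs_norm_sq_def by (rule infsum_tendsto_0_dominated[OF vs _ row_dom row_lim]) simp
qed

lemma kernel_apply_linear:
  assumes s: "\<sigma> > 1/2" and f: "l2w \<sigma> f" and g: "l2w \<sigma> g" and K: "\<And>n m. cmod (K n m) \<le> C"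
  shows "kernel_apply K (\<lambda>n. a * f n + b * g n) = (\<lambda>n. a * kernel_apply K f n + b * kernel_apply K g n)"
proof
  fix n
  have sf: "(\<lambda>m. K n m * f m) summable_on UNIV" by (rule summable_kernel_apply[OF s f K])
  have sg: "(\<lambda>m. K n m * g m) summable_on UNIV" by (rule summable_kernel_apply[OF s g K])
  have "kernel_apply K (\<lambda>n. a * f n + b * g n) n = infsum (\<lambda>m. a * (K n m * f m) + b * (K n m * g m)) UNIV"
    unfolding kernel_apply_def by (simp add: algebra_simps)
  also have "\<dots> = infsum (\<lambda>m. a * (K n m * f m)) UNIV + infsum (\<lambda>m. b * (K n m * g m)) UNIV"
    by (rule infsum_add[OF summable_on_cmult_right[OF sf] summable_on_cmult_right[OF sg]])
  also have "\<dots> = a * kernel_apply K f n + b * kernel_apply K g n"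
    unfolding kernel_apply_def by (simp add: infsum_cmult_right sf sg)
  finally show "kernel_apply K (\<lambda>n. a * f n + b * g n) n = a * kernel_apply K f n + b * kernel_apply K g n" .
qed

lemma wnorm_nonneg: "0 \<le> wnorm s f"
  unfolding wnorm_def by (simp add: infsum_nonneg)

lemma kernel_apply_diff:
  assumes s: "\<sigma> > 1/2" and f: "l2w \<sigma> f"
    and K: "\<And>n m. cmod (K n m) \<le> C" and L: "\<And>n m. cmod (L n m) \<le> C"
  shows "(\<lambda>n. kernel_apply K f n - kernel_apply L f n) = kernel_apply (\<lambda>n m. K n m - L n m) f"
proof
  fix n
  have "kernel_apply K f n - kernel_apply L f n = infsum (\<lambda>m. K n m * f m - L n m * f m) UNIV"
    unfolding kernel_apply_def
    by (rule infsum_diff[OF summable_kernel_apply[OF s f K] summable_kernel_apply[OF s f L], symmetric])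
  then show "kernel_apply K f n - kernel_apply L f n = kernel_apply (\<lambda>n m. K n m - L n m) f n"
    by (simp add: kernel_apply_def algebra_simps)
qed

lemma kernel_apply_tendsto:
  assumes s: "\<sigma> > 1/2"
    and bounded: "\<forall>\<^sub>F x in F. \<forall>n m. cmod (K x n m) \<le> C" and K0: "\<And>n m. cmod (K0 n m) \<le> C"
    and lim: "\<And>n m. ((\<lambda>x. K x n m) \<longlongrightarrow> K0 n m) F"
    and e: "e > 0"
  shows "\<forall>\<^sub>F x in F. \<forall>f. l2w \<sigma> f \<longrightarrow>
           wnorm (-\<sigma>) (\<lambda>n. kernel_apply (K x) f n - kernel_apply K0 f n) \<le> e * wnorm \<sigma> f"
proof -
  define D where "D x n m = K x n m - K0 n m" for x n m
  have D_bounded: "\<forall>\<^sub>F x in F. \<forall>n m. cmod (D x n m) \<le> 2 * C"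
    using bounded
  proof eventually_elim
    case (elim x)
    show ?case
      using norm_triangle_ineq4[of "K x _ _" "K0 _ _"] elim K0 unfolding D_def by (smt (verit))
  qed
  have "((\<lambda>x. hs_norm_sq \<sigma> (D x)) \<longlongrightarrow> 0) F"
    by (rule hs_norm_sq_tendsto_0[OF s D_bounded]) (use lim in \<open>simp add: D_def LIM_zero\<close>)
  then have small: "\<forall>\<^sub>F x in F. hs_norm_sq \<sigma> (D x) < e\<^sup>2"
    using e by (intro order_tendstoD(2)) auto
  show ?thesis
    using bounded D_bounded small
  proof eventually_elim
    case (elim x)
    show ?case
    proof (intro allI impI)
      fix f assume f: "l2w \<sigma> f"
      have Kx: "\<And>n m. cmod (K x n m) \<le> C" and Dx: "\<And>n m. cmod (D x n m) \<le> 2 * C" using elim by blast+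
      have "sqrt (hs_norm_sq \<sigma> (D x)) \<le> e"
        using elim(3) e real_sqrt_less_mono[of _ "e\<^sup>2"] by fastforce
      then have "sqrt (hs_norm_sq \<sigma> (D x)) * wnorm \<sigma> f \<le> e * wnorm \<sigma> f"
        by (rule mult_right_mono[OF _ wnorm_nonneg])
      moreover have "wnorm (-\<sigma>) (kernel_apply (D x) f) \<le> sqrt (hs_norm_sq \<sigma> (D x)) * wnorm \<sigma> f"
        by (rule kernel_apply_hs_bound(2)[OF s f Dx])
      moreover have "(\<lambda>n. kernel_apply (K x) f n - kernel_apply K0 f n) = kernel_apply (D x) f"
        unfolding D_def by (rule kernel_apply_diff[OF s f Kx K0])
      ultimately show "wnorm (-\<sigma>) (\<lambda>n. kernel_apply (K x) f n - kernel_apply K0 f n) \<le> e * wnorm \<sigma> f"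
        by simp
    qed
  qed
qed
lemma kernel_operator_limit:
  assumes s: "\<sigma> > 1/2" and K0: "\<And>n m. cmod (K0 n m) \<le> C"
    and bounded: "\<forall>\<^sub>F x in F. \<forall>n m. cmod (K x n m) \<le> C"
    and lim: "\<And>n m. ((\<lambda>x. K x n m) \<longlongrightarrow> K0 n m) F"
    and R: "\<forall>\<^sub>F x in F. \<forall>f. l2w \<sigma> f \<longrightarrow> R x f = kernel_apply (K x) f"
  shows "\<exists>L. (\<forall>f g a b. l2w \<sigma> f \<longrightarrow> l2w \<sigma> g \<longrightarrow> L (\<lambda>n. a * f n + b * g n) = (\<lambda>n. a * L f n + b * L g n))
         \<and> (\<exists>C. \<forall>f. l2w \<sigma> f \<longrightarrow> l2w (-\<sigma>) (L f) \<and> wnorm (-\<sigma>) (L f) \<le> C * wnorm \<sigma> f)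
         \<and> (\<forall>e>0. \<forall>\<^sub>F x in F. \<forall>f. l2w \<sigma> f \<longrightarrow> wnorm (-\<sigma>) (\<lambda>n. R x f n - L f n) \<le> e * wnorm \<sigma> f)"
proof (intro exI[of _ "kernel_apply K0"] conjI allI impI)
  show "kernel_apply K0 (\<lambda>n. a * f n + b * g n) = (\<lambda>n. a * kernel_apply K0 f n + b * kernel_apply K0 g n)"
    if "l2w \<sigma> f" "l2w \<sigma> g" for f g a b
    by (rule kernel_apply_linear[OF s that K0])
  show "\<exists>C. \<forall>f. l2w \<sigma> f \<longrightarrow> l2w (-\<sigma>) (kernel_apply K0 f) \<and> wnorm (-\<sigma>) (kernel_apply K0 f) \<le> C * wnorm \<sigma> f"
    using kernel_apply_hs_bound[where K=K0, OF s _ K0] by blast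
  show "\<forall>\<^sub>F x in F. \<forall>f. l2w \<sigma> f \<longrightarrow> wnorm (-\<sigma>) (\<lambda>n. R x f n - kernel_apply K0 f n) \<le> e * wnorm \<sigma> f"
    if "e > 0" for e
    using R kernel_apply_tendsto[OF s bounded K0 lim that] by eventually_elim simp
qed

section \<open>The resolvent as a kernel operator\<close>

lemma l2w0_iff: "l2w 0 w \<longleftrightarrow> (\<lambda>n. (cmod (w n))\<^sup>2) summable_on UNIV"
proof -
  have "\<And>n. (1 + real_of_int \<bar>n\<bar>) powr (2 * 0) = 1" by (simp add: add_pos_nonneg)
  then show ?thesis by (simp add: l2w_def)
qed

lemma Hop_diff: "Hop q (\<lambda>n. u n - v n) n = Hop q u n - Hop q v n"
  by (simp add: Hop_def algebra_simps)

lemma Hop_minus_joukowski: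
  "Hop q u n - (2 - \<zeta> - 1/\<zeta>) * u n = (\<zeta> + 1/\<zeta> + complex_of_real (q n)) * u n - u (n+1) - u (n-1)"
  by (simp add: Hop_def algebra_simps)

definition current :: "(int \<Rightarrow> complex) \<Rightarrow> int \<Rightarrow> real" where
  "current w n = Im (cnj (w n) * w (n+1))"

lemma eigenfunction_current:
  assumes h: "Hop q w n - z * w n = 0"
  shows "Im z * (cmod (w n))\<^sup>2 = current w (n - 1) - current w n"
proof -
  have "Im (cnj (w n) * Hop q w n) = Im (cnj (w n) * (z * w n))" using h by simp
  also have "cnj (w n) * (z * w n) = z * complex_of_real ((cmod (w n))\<^sup>2)"
    by (simp add: complex_norm_square[symmetric] algebra_simps)
  also have "Im \<dots> = Im z * (cmod (w n))\<^sup>2" by simp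
  finally have "Im (cnj (w n) * Hop q w n) = Im z * (cmod (w n))\<^sup>2" .
  moreover have "Im (cnj (w n) * Hop q w n) = current w (n - 1) - current w n"
  proof -
    have "cnj (w n) * Hop q w n = - (cnj (w n) * w (n+1)) + 2 * (cnj (w n) * w n)
        - cnj (w n) * w (n - 1) + complex_of_real (q n) * (cnj (w n) * w n)"
      by (simp add: Hop_def algebra_simps)
    moreover have "Im (cnj (w n) * w n) = 0" by (simp add: complex_norm_square[symmetric])
    moreover have "Im (cnj (w n) * w (n - 1)) = - current w (n - 1)" by (simp add: current_def algebra_simps)
    ultimately show ?thesis by (simp add: current_def)
  qed
  ultimately show ?thesis by simp
qed

lemma infsum_int_telescope:
  fixes a :: "int \<Rightarrow> real"
  assumes "a summable_on UNIV"
  shows "infsum (\<lambda>n. a (n - 1) - a n) UNIV = 0"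
proof -
  have "(\<lambda>n. a (n + -1)) summable_on UNIV" using assms summable_on_int_shift[of a "-1"] by simp
  then have "infsum (\<lambda>n. a (n + -1) - a n) UNIV = infsum (\<lambda>n. a (n + -1)) UNIV - infsum a UNIV"
    by (rule infsum_diff[OF _ assms])
  then show ?thesis using infsum_int_shift[of a "-1"] by simp
qed

text \<open>Summed over \<open>\<int>\<close>, the current identity telescopes to \<open>Im z * (\<Sum>n. \<bar>w n\<bar>\<^sup>2) = 0\<close>.\<close>

lemma l2_eigenfunction_nonreal_zero:
  fixes w :: "int \<Rightarrow> complex"
  assumes w: "l2w 0 w" and h: "\<And>n. Hop q w n - z * w n = 0" and im: "Im z \<noteq> 0"
  shows "w = (\<lambda>_. 0)"
proof -
  have sw: "(\<lambda>n. (cmod (w n))\<^sup>2) summable_on UNIV" using w by (simp add: l2w0_iff)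
  have ab: "\<bar>current w n\<bar> \<le> (cmod (w n))\<^sup>2 + (cmod (w (n+1)))\<^sup>2" for n
  proof -
    have "\<bar>current w n\<bar> \<le> cmod (w n) * cmod (w (n+1))"
      unfolding current_def using abs_Im_le_cmod[of "cnj (w n) * w (n+1)"] by (simp add: norm_mult)
    also have "\<dots> \<le> (cmod (w n))\<^sup>2 + (cmod (w (n+1)))\<^sup>2"
      using sum_squares_bound[of "cmod (w n)" "cmod (w (n+1))"]
        mult_nonneg_nonneg[OF norm_ge_zero norm_ge_zero, of "w n" "w (n+1)"] by linarith
    finally show ?thesis .
  qed
  have sw1: "(\<lambda>n. (cmod (w (n+1)))\<^sup>2) summable_on UNIV"
    using sw summable_on_int_shift[of "\<lambda>n. (cmod (w n))\<^sup>2" 1] by simp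
  have "(\<lambda>n. norm (current w n)) summable_on UNIV"
    by (rule summable_on_comparison_test[OF summable_on_add[OF sw sw1]]) (use ab in auto)
  then have sa: "current w summable_on UNIV" by (rule summable_on_iff_abs_summable_on_real[THEN iffD2])
  have "Im z * infsum (\<lambda>n. (cmod (w n))\<^sup>2) UNIV = infsum (\<lambda>n. Im z * (cmod (w n))\<^sup>2) UNIV"
    using infsum_cmult_right[of "Im z" "\<lambda>n. (cmod (w n))\<^sup>2" UNIV] sw by simp
  also have "\<dots> = infsum (\<lambda>n. current w (n - 1) - current w n) UNIV"
    by (rule infsum_cong) (simp add: eigenfunction_current[OF h])
  also have "\<dots> = 0" by (rule infsum_int_telescope[OF sa])
  finally have z0: "infsum (\<lambda>n. (cmod (w n))\<^sup>2) UNIV = 0" using im by simp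
  show ?thesis
  proof
    fix n
    have "(cmod (w n))\<^sup>2 = 0" by (rule nonneg_infsum_le_0D[OF _ sw]) (use z0 in simp_all)
    then show "w n = 0" by simp
  qed
qed

lemma resolvent_eqI:
  assumes u: "l2w 0 u" and e: "\<And>n. Hop q u n - z * u n = f n" and im: "Im z \<noteq> 0"
  shows "resolvent q z f = u"
  unfolding resolvent_def
proof (rule the_equality)
  show "l2w 0 u \<and> (\<forall>n. Hop q u n - z * u n = f n)" using u e by simp
  fix u' assume a: "l2w 0 u' \<and> (\<forall>n. Hop q u' n - z * u' n = f n)"
  define w where "w n = u' n - u n" for n
  have "(\<lambda>n. (cmod (w n))\<^sup>2) summable_on UNIV"
  proof (rule summable_on_comparison_test)
    show "(\<lambda>n. 2 * (cmod (u' n))\<^sup>2 + 2 * (cmod (u n))\<^sup>2) summable_on UNIV"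
      using a u by (intro summable_on_add summable_on_cmult_right) (simp_all add: l2w0_iff)
    fix n
    have "cmod (w n) \<le> cmod (u' n) + cmod (u n)" unfolding w_def by (rule norm_triangle_ineq4)
    then have "(cmod (w n))\<^sup>2 \<le> (cmod (u' n) + cmod (u n))\<^sup>2" by (rule power_mono) simp
    also have "\<dots> \<le> 2 * (cmod (u' n))\<^sup>2 + 2 * (cmod (u n))\<^sup>2"
      using sum_squares_bound[of "cmod (u' n)" "cmod (u n)"] by (simp add: power2_sum)
    finally show "(cmod (w n))\<^sup>2 \<le> 2 * (cmod (u' n))\<^sup>2 + 2 * (cmod (u n))\<^sup>2" .
  qed simp
  then have wl: "l2w 0 w" by (simp add: l2w0_iff)
  have "\<And>n. Hop q w n - z * w n = 0"
  proof -
    fix n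
    have "Hop q w n - z * w n = (Hop q u' n - z * u' n) - (Hop q u n - z * u n)"
      unfolding w_def Hop_diff by (simp add: algebra_simps)
    then show "Hop q w n - z * w n = 0" using a e by simp
  qed
  from l2_eigenfunction_nonreal_zero[OF wl this im] have "w = (\<lambda>_. 0)" .
  then show "u' = u" unfolding w_def by (metis (no_types) eq_iff_diff_eq_0 ext)
qed

text \<open>By Tonelli on \<open>\<int> \<times> \<int>\<close>, since every column of \<open>r\<^sup>\<bar>\<^sup>n\<^sup>-\<^sup>m\<^sup>\<bar>\<close> has the same sum.\<close>

lemma summable_on_geometric_convolution:
  fixes g :: "int \<Rightarrow> real"
  assumes r: "0 \<le> r" "r < 1" and g: "g summable_on UNIV" and g0: "\<And>m. 0 \<le> g m"
  shows "(\<lambda>m. r ^ nat \<bar>n - m\<bar> * g m) summable_on UNIV"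
    "(\<lambda>n. infsum (\<lambda>m. r ^ nat \<bar>n - m\<bar> * g m) UNIV) summable_on UNIV"
proof -
  have le: "r ^ nat \<bar>n - m\<bar> * g m \<le> g m" for n m
    using r g0[of m] by (intro mult_left_le_one_le power_le_one) auto
  show rowsum: "(\<lambda>m. r ^ nat \<bar>n - m\<bar> * g m) summable_on UNIV" for n
    by (rule summable_on_comparison_test[OF g le]) (use r g0 in simp)
  define R where "R = infsum (\<lambda>k::int. r ^ nat \<bar>k\<bar>) UNIV"
  have gs: "(\<lambda>k::int. r ^ nat \<bar>k\<bar>) summable_on UNIV" by (rule summable_on_power_abs_int[OF r])
  have col: "((\<lambda>n. r ^ nat \<bar>n - m\<bar>) has_sum R) UNIV" for m
  proof -
    have "(\<lambda>n. r ^ nat \<bar>n + - m\<bar>) summable_on UNIV"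
      using summable_on_int_shift[of "\<lambda>k. r ^ nat \<bar>k\<bar>" "-m"] gs by simp
    moreover have "infsum (\<lambda>n. r ^ nat \<bar>n + - m\<bar>) UNIV = R"
      using infsum_int_shift[of "\<lambda>k. r ^ nat \<bar>k\<bar>" "-m"] by (simp add: R_def)
    ultimately show ?thesis using has_sum_infsum by fastforce
  qed
  define h where "h x = r ^ nat \<bar>snd x - fst x\<bar> * g (fst x)" for x :: "int \<times> int"
  have "h summable_on Sigma UNIV (\<lambda>_. UNIV)"
  proof (rule summable_on_SigmaI)
    show "((\<lambda>n. h (m, n)) has_sum (R * g m)) UNIV" for m
      unfolding h_def fst_conv snd_conv by (rule has_sum_cmult_left[OF col])
    show "(\<lambda>m. R * g m) summable_on UNIV" by (rule summable_on_cmult_right[OF g])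
    show "0 \<le> h (m, n)" for m n using r g0 by (simp add: h_def)
  qed
  then have "(\<lambda>(n, m). h (m, n)) summable_on Sigma UNIV (\<lambda>_. UNIV)"
    using summable_on_swap[of h UNIV UNIV] by simp
  then have "(\<lambda>n. infsum (\<lambda>m. (\<lambda>(n, m). h (m, n)) (n, m)) UNIV) summable_on UNIV"
    by (rule summable_on_SigmaD) (use rowsum in \<open>simp add: h_def abs_minus_commute\<close>)
  then show "(\<lambda>n. infsum (\<lambda>m. r ^ nat \<bar>n - m\<bar> * g m) UNIV) summable_on UNIV"
    by (simp add: h_def abs_minus_commute)
qed

lemma summable_on_kernel_apply_sq:
  fixes K :: "int \<Rightarrow> int \<Rightarrow> complex" and f :: "int \<Rightarrow> complex"
  assumes K: "\<And>n m. cmod (K n m) \<le> C * r ^ nat \<bar>n - m\<bar>" and r: "0 \<le> r" "r < 1" and C: "0 \<le> C"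
    and f1: "(\<lambda>m. cmod (f m)) summable_on UNIV"
  shows "(\<lambda>n. (cmod (kernel_apply K f n))\<^sup>2) summable_on UNIV"
proof -
  define F1 where "F1 = infsum (\<lambda>m. cmod (f m)) UNIV"
  define a where "a n = infsum (\<lambda>m. r ^ nat \<bar>n - m\<bar> * cmod (f m)) UNIV" for n
  note rowsum = summable_on_geometric_convolution(1)[OF r f1 norm_ge_zero]
  have asum: "a summable_on UNIV"
    unfolding a_def by (rule summable_on_geometric_convolution(2)[OF r f1 norm_ge_zero])
  have aF: "a n \<le> F1" for n unfolding a_def F1_def
    by (rule infsum_mono[OF rowsum f1]) (use r in \<open>intro mult_left_le_one_le power_le_one, auto\<close>)
  have a0: "0 \<le> a n" for n unfolding a_def by (rule infsum_nonneg) (use r in simp)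
  have kb: "cmod (kernel_apply K f n) \<le> C * a n" for n
  proof -
    have sKf: "(\<lambda>m. C * (r ^ nat \<bar>n - m\<bar> * cmod (f m))) summable_on UNIV"
      by (rule summable_on_cmult_right[OF rowsum])
    have bnd: "norm (K n m * f m) \<le> C * (r ^ nat \<bar>n - m\<bar> * cmod (f m))" for m
      unfolding norm_mult using mult_right_mono[OF K[of n m] norm_ge_zero[of "f m"]] by (simp add: mult.assoc)
    have abs: "(\<lambda>m. norm (K n m * f m)) summable_on UNIV"
      by (rule summable_on_comparison_test[OF sKf bnd]) simp
    have "cmod (kernel_apply K f n) \<le> infsum (\<lambda>m. norm (K n m * f m)) UNIV"
      unfolding kernel_apply_def by (rule norm_infsum_bound[OF abs])
    also have "\<dots> \<le> infsum (\<lambda>m. C * (r ^ nat \<bar>n - m\<bar> * cmod (f m))) UNIV"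
      by (rule infsum_mono[OF abs sKf bnd])
    also have "\<dots> = C * a n" unfolding a_def by (rule infsum_cmult_right) (use rowsum in simp)
    finally show ?thesis .
  qed
  show ?thesis
  proof (rule summable_on_comparison_test)
    show "(\<lambda>n. C\<^sup>2 * F1 * a n) summable_on UNIV" by (rule summable_on_cmult_right[OF asum])
    fix n
    have "(cmod (kernel_apply K f n))\<^sup>2 \<le> (C * a n)\<^sup>2" by (rule power_mono[OF kb]) simp
    also have "\<dots> = C\<^sup>2 * (a n * a n)" by (simp add: power2_eq_square)
    also have "\<dots> \<le> C\<^sup>2 * (F1 * a n)" by (intro mult_left_mono mult_right_mono aF a0) simp_all
    finally show "(cmod (kernel_apply K f n))\<^sup>2 \<le> C\<^sup>2 * F1 * a n" by (simp add: mult.assoc)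
  qed simp
qed

lemma infsum_cmult_diff_diff:
  fixes f g h :: "int \<Rightarrow> complex"
  assumes f: "f summable_on UNIV" and g: "g summable_on UNIV" and h: "h summable_on UNIV"
  shows "infsum (\<lambda>m. c * f m - g m - h m) UNIV = c * infsum f UNIV - infsum g UNIV - infsum h UNIV"
proof -
  have cf: "(\<lambda>m. c * f m) summable_on UNIV" by (rule summable_on_cmult_right[OF f])
  have "infsum (\<lambda>m. c * f m - g m - h m) UNIV = infsum (\<lambda>m. c * f m - g m) UNIV - infsum h UNIV"
    by (rule infsum_diff[OF summable_on_diff[OF cf g] h])
  also have "infsum (\<lambda>m. c * f m - g m) UNIV = infsum (\<lambda>m. c * f m) UNIV - infsum g UNIV"
    by (rule infsum_diff[OF cf g])
  finally show ?thesis using f by (simp add: infsum_cmult_right)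
qed

context jost_pair begin

lemma resolvent_eq_kernel_apply:
  assumes z: "\<zeta> \<in> jost_domain \<delta>" and r: "cmod \<zeta> < 1" and W: "jost_wronskian q \<zeta> \<noteq> 0"
    and im: "Im (2 - \<zeta> - 1/\<zeta>) \<noteq> 0" and s: "\<sigma> > 1/2" and f: "l2w \<sigma> f"
  shows "resolvent q (2 - \<zeta> - 1/\<zeta>) f = kernel_apply (green_kernel q \<zeta>) f"
proof (rule resolvent_eqI[OF _ _ im])
  define \<Gamma> where "\<Gamma> = (1 + P.weight_bound) * (1 + R.weight_bound) / cmod (jost_wronskian q \<zeta>)"
  have \<Gamma>0: "0 \<le> \<Gamma>" unfolding \<Gamma>_def using P.weight_bound_ge_1 R.weight_bound_ge_1 by simp
  have Kg: "cmod (green_kernel q \<zeta> n m) \<le> \<Gamma> * cmod \<zeta> ^ nat \<bar>n - m\<bar>" for n m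
    unfolding \<Gamma>_def by (rule norm_green_kernel_le[OF z])
  have Kc: "cmod (green_kernel q \<zeta> n m) \<le> \<Gamma>" for n m
  proof -
    have "cmod \<zeta> ^ nat \<bar>n - m\<bar> \<le> 1" using r by (simp add: power_le_one)
    then show ?thesis using Kg[of n m] \<Gamma>0 by (meson mult_left_le order_trans)
  qed
  have f1: "(\<lambda>m. cmod (f m)) summable_on UNIV" by (rule l2w_summable_norm[OF s f])
  show "l2w 0 (kernel_apply (green_kernel q \<zeta>) f)"
    unfolding l2w0_iff by (rule summable_on_kernel_apply_sq[OF Kg _ r \<Gamma>0 f1]) simp
  fix n
  have sm: "\<And>k. (\<lambda>m. green_kernel q \<zeta> k m * f m) summable_on UNIV" by (rule summable_kernel_apply[OF s f Kc])
  let ?c = "\<zeta> + 1/\<zeta> + complex_of_real (q n)"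
  have "Hop q (kernel_apply (green_kernel q \<zeta>) f) n - (2 - \<zeta> - 1/\<zeta>) * kernel_apply (green_kernel q \<zeta>) f n
      = ?c * kernel_apply (green_kernel q \<zeta>) f n - kernel_apply (green_kernel q \<zeta>) f (n+1) - kernel_apply (green_kernel q \<zeta>) f (n-1)"
    by (rule Hop_minus_joukowski)
  also have "\<dots> = infsum (\<lambda>m. ?c * (green_kernel q \<zeta> n m * f m) - green_kernel q \<zeta> (n+1) m * f m - green_kernel q \<zeta> (n-1) m * f m) UNIV"
    unfolding kernel_apply_def by (rule infsum_cmult_diff_diff[OF sm sm sm, symmetric])
  also have "\<dots> = infsum (\<lambda>m. (?c * green_kernel q \<zeta> n m - green_kernel q \<zeta> (n+1) m - green_kernel q \<zeta> (n-1) m) * f m) UNIV"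
    by (simp add: algebra_simps)
  also have "\<dots> = infsum (\<lambda>m. (if n = m then 1 else 0) * f m) UNIV"
    by (simp only: green_kernel_equation[OF z W])
  also have "\<dots> = f n" by (rule infsum_delta)
  finally show "Hop q (kernel_apply (green_kernel q \<zeta>) f) n - (2 - \<zeta> - 1/\<zeta>) * kernel_apply (green_kernel q \<zeta>) f n = f n" .
qed

end

section \<open>The limit on the unit circle\<close>

lemma quadratic_root_identities:
  fixes w S :: complex and s :: real
  assumes S: "S^2 = 4 - w^2" and s: "s^2 = 1"
  shows "(w + \<i> * complex_of_real s * S) / 2 \<noteq> 0"
    "1 / ((w + \<i> * complex_of_real s * S) / 2) = (w - \<i> * complex_of_real s * S) / 2"
    "(w + \<i> * complex_of_real s * S) / 2 - 1 / ((w + \<i> * complex_of_real s * S) / 2) = \<i> * complex_of_real s * S"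
    "2 - (w + \<i> * complex_of_real s * S) / 2 - 1 / ((w + \<i> * complex_of_real s * S) / 2) = 2 - w"
proof -
  have s': "(complex_of_real s)^2 = 1" using s by (metis of_real_eq_1_iff of_real_power)
  have "(w + \<i> * complex_of_real s * S) * (w - \<i> * complex_of_real s * S) = w^2 + (complex_of_real s)^2 * S^2"
    by (simp add: algebra_simps power2_eq_square)
  also have "\<dots> = 4" using S s' by simp
  finally have p: "((w + \<i> * complex_of_real s * S) / 2) * ((w - \<i> * complex_of_real s * S) / 2) = 1" by simp
  then show nz: "(w + \<i> * complex_of_real s * S) / 2 \<noteq> 0" by auto
  show inv: "1 / ((w + \<i> * complex_of_real s * S) / 2) = (w - \<i> * complex_of_real s * S) / 2"
    using p nz by (simp add: field_simps)
  show "(w + \<i> * complex_of_real s * S) / 2 - 1 / ((w + \<i> * complex_of_real s * S) / 2) = \<i> * complex_of_real s * S"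
    unfolding inv by (simp add: field_simps)
  show "2 - (w + \<i> * complex_of_real s * S) / 2 - 1 / ((w + \<i> * complex_of_real s * S) / 2) = 2 - w"
    unfolding inv by (simp add: field_simps)
qed

lemma Im_joukowski:
  fixes \<zeta> :: complex assumes "\<zeta> \<noteq> 0"
  shows "Im (2 - \<zeta> - 1/\<zeta>) = Im \<zeta> * (1 / (cmod \<zeta>)^2 - 1)"
proof -
  have "Im (1/\<zeta>) = - Im \<zeta> / (cmod \<zeta>)^2" by (simp add: Im_divide')
  then show ?thesis by (simp add: algebra_simps)
qed

lemma norm_lt_1_if_Im_joukowski:
  fixes \<zeta> :: complex assumes "\<zeta> \<noteq> 0" and "Im (2 - \<zeta> - 1/\<zeta>) * Im \<zeta> > 0"
  shows "cmod \<zeta> < 1"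
proof -
  have e: "Im (2 - \<zeta> - 1/\<zeta>) * Im \<zeta> = (Im \<zeta>)^2 * (1 / (cmod \<zeta>)^2 - 1)"
    by (simp only: Im_joukowski[OF assms(1)]) (simp add: power2_eq_square algebra_simps)
  have "(Im \<zeta>)^2 * (1 / (cmod \<zeta>)^2 - 1) > 0" using assms(2) unfolding e .
  then have "1 / (cmod \<zeta>)^2 - 1 > 0" by (auto simp: zero_less_mult_iff)
  then have "(cmod \<zeta>)^2 < 1" using assms(1) by (simp add: field_simps)
  then show ?thesis by (simp add: power_less_one_iff abs_square_less_1)
qed

lemma joukowski_root_in_domain:
  fixes \<zeta> S :: complex and s \<epsilon> \<delta> :: real
  assumes z0: "\<zeta> \<noteq> 0" and im: "Im (2 - \<zeta> - 1/\<zeta>) = s * \<epsilon>"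
    and d: "\<zeta> - 1/\<zeta> = \<i> * complex_of_real s * S" and s: "s^2 = 1"
    and \<epsilon>: "0 < \<epsilon>" "\<epsilon> < Re S" and \<delta>: "\<delta> \<le> Re S"
  shows "\<zeta> \<in> jost_domain \<delta>" "cmod \<zeta> < 1"
proof -
  have "Im (\<zeta> - 1/\<zeta>) = s * Re S" using d by simp
  then have im_z: "Im \<zeta> = s * (Re S - \<epsilon>) / 2" using im by (simp add: algebra_simps)
  have "Im (2 - \<zeta> - 1/\<zeta>) * Im \<zeta> = s^2 * (\<epsilon> * (Re S - \<epsilon>)) / 2"
    unfolding im im_z by (simp add: power2_eq_square algebra_simps)
  also have "\<dots> > 0" using s \<epsilon> by simp
  finally show lt1: "cmod \<zeta> < 1" by (rule norm_lt_1_if_Im_joukowski[OF z0])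
  have "\<bar>s\<bar> = 1" using s by (auto simp: power2_eq_1_iff)
  then have "cmod (\<zeta> - 1/\<zeta>) = cmod S" unfolding d by (simp add: norm_mult)
  then have "\<delta> \<le> cmod (\<zeta> - 1/\<zeta>)" using \<delta> complex_Re_le_cmod[of S] by linarith
  then show "\<zeta> \<in> jost_domain \<delta>" using lt1 z0 by (simp add: jost_domain_def)
qed

lemma unimodular_joukowski_root:
  fixes w0 s :: real
  assumes w0: "w0^2 < 4" and s: "s^2 = 1"
  defines "S0 \<equiv> sqrt (4 - w0^2)"
  shows "cmod ((complex_of_real w0 + \<i> * complex_of_real s * complex_of_real S0) / 2) = 1"
    "(complex_of_real w0 + \<i> * complex_of_real s * complex_of_real S0) / 2 \<in> jost_domain (S0 / 2)"
proof -
  define \<zeta>0 where "\<zeta>0 = (complex_of_real w0 + \<i> * complex_of_real s * complex_of_real S0) / 2"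
  have S0p: "0 < S0" using w0 by (simp add: S0_def)
  have "S0^2 = 4 - w0^2" using w0 by (simp add: S0_def)
  then have S0sq: "(complex_of_real S0)^2 = 4 - (complex_of_real w0)^2"
    by (metis of_real_diff of_real_numeral of_real_power)
  have "\<zeta>0 = Complex (w0/2) (s*S0/2)" by (simp add: \<zeta>0_def complex_eq_iff)
  moreover have "(w0/2)^2 + (s*S0/2)^2 = 1"
    using w0 s by (simp add: S0_def power_divide power_mult_distrib field_simps)
  ultimately show abs1: "cmod \<zeta>0 = 1" by (simp add: cmod_def)
  have "\<zeta>0 - 1 / \<zeta>0 = \<i> * complex_of_real s * complex_of_real S0"
    using quadratic_root_identities(3)[OF S0sq s] by (simp add: \<zeta>0_def)
  then have "cmod (\<zeta>0 - 1 / \<zeta>0) = S0" using S0p s by (auto simp: norm_mult power2_eq_1_iff)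
  then show "\<zeta>0 \<in> jost_domain (S0 / 2)" using abs1 S0p by (auto simp: jost_domain_def)
qed

lemma csqrt_joukowski_tendsto:
  fixes w0 s :: real
  assumes w0: "w0^2 < 4"
  shows "((\<lambda>\<epsilon>. csqrt (4 - (complex_of_real w0 - \<i> * complex_of_real (s * \<epsilon>))^2))
           \<longlongrightarrow> complex_of_real (sqrt (4 - w0^2))) (at_right 0)"
proof -
  have e4: "4 - (complex_of_real w0)^2 = complex_of_real (4 - w0^2)" by simp
  have "4 - (complex_of_real w0)^2 \<notin> \<real>\<^sub>\<le>\<^sub>0" unfolding e4 using w0 by (simp add: complex_nonpos_Reals_iff)
  moreover have "((\<lambda>\<epsilon>. 4 - (complex_of_real w0 - \<i> * complex_of_real (s * \<epsilon>))^2)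
      \<longlongrightarrow> 4 - (complex_of_real w0 - \<i> * complex_of_real (s * 0))^2) (at_right 0)"
    by (intro tendsto_intros)
  ultimately have "((\<lambda>\<epsilon>. csqrt (4 - (complex_of_real w0 - \<i> * complex_of_real (s * \<epsilon>))^2))
      \<longlongrightarrow> csqrt (4 - (complex_of_real w0)^2)) (at_right 0)"
    by (auto intro: isCont_tendsto_compose[OF continuous_at_csqrt])
  moreover have "csqrt (4 - (complex_of_real w0)^2) = complex_of_real (sqrt (4 - w0^2))"
    unfolding e4 using w0 by (simp add: csqrt_of_real_nonneg)
  ultimately show ?thesis by simp
qed

lemma limiting_spectral_parameter:
  fixes \<omega> s :: real
  assumes \<omega>: "0 < \<omega>" "\<omega> < 4" and s: "s \<in> {1, -1}"
  obtains \<delta> \<zeta>0 zt where "0 < \<delta>" "\<zeta>0 \<in> jost_domain \<delta>" "cmod \<zeta>0 = 1" "(zt \<longlongrightarrow> \<zeta>0) (at_right 0)"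
    "\<forall>\<^sub>F \<epsilon> in at_right 0. zt \<epsilon> \<in> jost_domain \<delta> \<and> cmod (zt \<epsilon>) < 1"
    "\<And>\<epsilon>. 2 - zt \<epsilon> - 1 / zt \<epsilon> = complex_of_real \<omega> + \<i> * complex_of_real (s * \<epsilon>)"
proof -
  have s2: "s^2 = 1" using s by auto
  define w0 where "w0 = 2 - \<omega>"
  have w0b: "w0^2 < 4"
  proof -
    have "(w0 - 2) * (w0 + 2) < 0" using \<omega> by (intro mult_neg_pos) (auto simp: w0_def)
    then show ?thesis by (simp add: power2_eq_square algebra_simps)
  qed
  define S0 where "S0 = sqrt (4 - w0^2)"
  have S0p: "0 < S0" using w0b by (simp add: S0_def)
  define \<zeta>0 where "\<zeta>0 = (complex_of_real w0 + \<i> * complex_of_real s * complex_of_real S0) / 2"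
  define wv where "wv \<epsilon> = complex_of_real w0 - \<i> * complex_of_real (s * \<epsilon>)" for \<epsilon> :: real
  define Sv where "Sv \<epsilon> = csqrt (4 - (wv \<epsilon>)^2)" for \<epsilon>
  define zt where "zt \<epsilon> = (wv \<epsilon> + \<i> * complex_of_real s * Sv \<epsilon>) / 2" for \<epsilon>
  have Ssq: "(Sv \<epsilon>)^2 = 4 - (wv \<epsilon>)^2" for \<epsilon> by (simp add: Sv_def)
  have zt_z: "2 - zt \<epsilon> - 1 / zt \<epsilon> = complex_of_real \<omega> + \<i> * complex_of_real (s * \<epsilon>)" for \<epsilon>
    using quadratic_root_identities(4)[OF Ssq[of \<epsilon>] s2] by (simp add: zt_def wv_def w0_def)
  have Sv_t: "(Sv \<longlongrightarrow> complex_of_real S0) (at_right 0)"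
    unfolding Sv_def[abs_def] wv_def S0_def by (rule csqrt_joukowski_tendsto[OF w0b])
  have wv_t: "(wv \<longlongrightarrow> complex_of_real w0) (at_right 0)"
  proof -
    have "((\<lambda>\<epsilon>. complex_of_real w0 - \<i> * complex_of_real (s * \<epsilon>))
        \<longlongrightarrow> complex_of_real w0 - \<i> * complex_of_real (s * 0)) (at_right 0)"
      by (intro tendsto_intros)
    then show ?thesis by (simp add: wv_def[abs_def])
  qed
  have zt_t: "(zt \<longlongrightarrow> \<zeta>0) (at_right 0)"
    unfolding zt_def[abs_def] \<zeta>0_def by (intro tendsto_intros wv_t Sv_t) simp
  have "((\<lambda>\<epsilon>. Re (Sv \<epsilon>)) \<longlongrightarrow> S0) (at_right 0)"
    using tendsto_Re[OF Sv_t] by simp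
  then have "\<forall>\<^sub>F \<epsilon> in at_right 0. S0 / 2 < Re (Sv \<epsilon>)"
    by (rule order_tendstoD(1)) (use S0p in simp)
  moreover have "\<forall>\<^sub>F \<epsilon> in at_right (0::real). 0 < \<epsilon> \<and> \<epsilon> < S0 / 2"
    using S0p by (intro eventually_conj eventually_at_right_less order_tendstoD(2)[OF tendsto_ident_at]) auto
  ultimately have ev: "\<forall>\<^sub>F \<epsilon> in at_right 0. zt \<epsilon> \<in> jost_domain (S0 / 2) \<and> cmod (zt \<epsilon>) < 1"
  proof eventually_elim
    case (elim \<epsilon>)
    have "zt \<epsilon> \<noteq> 0" using quadratic_root_identities(1)[OF Ssq s2] by (simp add: zt_def)
    moreover have "zt \<epsilon> - 1 / zt \<epsilon> = \<i> * complex_of_real s * Sv \<epsilon>"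
      using quadratic_root_identities(3)[OF Ssq s2] by (simp add: zt_def)
    ultimately show ?case using joukowski_root_in_domain[of "zt \<epsilon>" s \<epsilon> "Sv \<epsilon>" "S0 / 2"] zt_z elim s2 by simp
  qed
  show thesis
    by (rule that[OF _ _ _ zt_t ev zt_z]) (use S0p unimodular_joukowski_root[OF w0b s2] in \<open>simp_all add: \<zeta>0_def S0_def\<close>)
qed

context jost_pair begin

lemma continuous_on_jost_plus: "continuous_on (jost_domain \<delta>) (\<lambda>\<zeta>. jost_plus q \<zeta> n)"
  unfolding jost_plus_def
  by (intro continuous_intros P.continuous_on_jost_factor) (auto simp: jost_domain_def)

lemma continuous_on_jost_minus: "continuous_on (jost_domain \<delta>) (\<lambda>\<zeta>. jost_minus q \<zeta> n)"
  unfolding jost_minus_def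
  by (intro continuous_intros R.continuous_on_jost_factor) (auto simp: jost_domain_def)

lemma continuous_on_jost_wronskian: "continuous_on (jost_domain \<delta>) (\<lambda>\<zeta>. jost_wronskian q \<zeta>)"
  unfolding jost_wronskian_def wronskian_def by (intro continuous_intros continuous_on_jost_plus continuous_on_jost_minus)

lemma green_kernel_tendsto:
  assumes zt: "(zt \<longlongrightarrow> \<zeta>0) F" and z0: "\<zeta>0 \<in> jost_domain \<delta>" and ev: "\<forall>\<^sub>F x in F. zt x \<in> jost_domain \<delta>"
    and W: "jost_wronskian q \<zeta>0 \<noteq> 0"
  shows "((\<lambda>x. green_kernel q (zt x) n m) \<longlongrightarrow> green_kernel q \<zeta>0 n m) F"
proof -
  have a: "((\<lambda>x. jost_plus q (zt x) (max n m)) \<longlongrightarrow> jost_plus q \<zeta>0 (max n m)) F"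
    by (rule continuous_on_tendsto_compose[OF continuous_on_jost_plus zt z0 ev])
  have b: "((\<lambda>x. jost_minus q (zt x) (min n m)) \<longlongrightarrow> jost_minus q \<zeta>0 (min n m)) F"
    by (rule continuous_on_tendsto_compose[OF continuous_on_jost_minus zt z0 ev])
  have c: "((\<lambda>x. jost_wronskian q (zt x)) \<longlongrightarrow> jost_wronskian q \<zeta>0) F"
    by (rule continuous_on_tendsto_compose[OF continuous_on_jost_wronskian zt z0 ev])
  show ?thesis unfolding green_kernel_def by (rule tendsto_divide[OF tendsto_mult[OF a b] c W])
qed

end

context jost_pair
begin

lemma green_kernel_eventually_bounded:
  assumes zt: "(zt \<longlongrightarrow> \<zeta>0) F" and z0: "\<zeta>0 \<in> jost_domain \<delta>" and ev: "\<forall>\<^sub>F x in F. zt x \<in> jost_domain \<delta>"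
    and W: "jost_wronskian q \<zeta>0 \<noteq> 0"
  obtains \<Gamma> where "\<And>n m. cmod (green_kernel q \<zeta>0 n m) \<le> \<Gamma>"
    "\<forall>\<^sub>F x in F. jost_wronskian q (zt x) \<noteq> 0 \<and> (\<forall>n m. cmod (green_kernel q (zt x) n m) \<le> \<Gamma>)"
proof -
  define c where "c = (1 + P.weight_bound) * (1 + R.weight_bound)"
  have c0: "0 \<le> c" using P.weight_bound_ge_1 R.weight_bound_ge_1 by (simp add: c_def)
  have bound: "cmod (green_kernel q \<zeta> n m) \<le> c / cmod (jost_wronskian q \<zeta>)" if "\<zeta> \<in> jost_domain \<delta>" for \<zeta> n m
  proof -
    have "cmod (green_kernel q \<zeta> n m) \<le> c / cmod (jost_wronskian q \<zeta>) * cmod \<zeta> ^ nat \<bar>n - m\<bar>"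
      unfolding c_def by (rule norm_green_kernel_le[OF that])
    also have "\<dots> \<le> c / cmod (jost_wronskian q \<zeta>) * 1"
      using that c0 by (intro mult_left_mono power_le_one) (auto simp: jost_domain_def)
    finally show ?thesis by simp
  qed
  have "((\<lambda>x. cmod (jost_wronskian q (zt x))) \<longlongrightarrow> cmod (jost_wronskian q \<zeta>0)) F"
    by (intro tendsto_norm continuous_on_tendsto_compose[OF continuous_on_jost_wronskian zt z0 ev])
  then have "\<forall>\<^sub>F x in F. cmod (jost_wronskian q \<zeta>0) / 2 < cmod (jost_wronskian q (zt x))"
    by (rule order_tendstoD(1)) (use W in simp)
  with ev have "\<forall>\<^sub>F x in F. jost_wronskian q (zt x) \<noteq> 0
      \<and> (\<forall>n m. cmod (green_kernel q (zt x) n m) \<le> c / (cmod (jost_wronskian q \<zeta>0) / 2))"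
  proof eventually_elim
    case (elim x)
    have W0: "0 < cmod (jost_wronskian q \<zeta>0) / 2" using W by simp
    with elim(2) have "0 < cmod (jost_wronskian q (zt x))" by linarith
    with W0 elim(2) c0 have le: "c / cmod (jost_wronskian q (zt x)) \<le> c / (cmod (jost_wronskian q \<zeta>0) / 2)"
      by (intro divide_left_mono) auto
    show ?case using bound[OF elim(1)] order_trans[OF _ le] \<open>0 < cmod (jost_wronskian q (zt x))\<close> by auto
  qed
  moreover have "cmod (green_kernel q \<zeta>0 n m) \<le> c / (cmod (jost_wronskian q \<zeta>0) / 2)" for n m
  proof -
    have "c / cmod (jost_wronskian q \<zeta>0) \<le> c / (cmod (jost_wronskian q \<zeta>0) / 2)"
      using W c0 by (intro divide_left_mono) auto
    with bound[OF z0, of n m] show ?thesis by linarith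
  qed
  ultimately show thesis by (rule that[rotated])
qed

end

theorem lemma3p3:
  fixes q :: "int \<Rightarrow> real" and \<omega> \<sigma> :: real
  assumes "(\<lambda>n. \<bar>q n\<bar>) summable_on UNIV"
    and "0 < \<omega>" and "\<omega> < 4"
    and "\<sigma> > 1/2"
  shows "\<forall>s \<in> {1, -1::real}. \<exists>L :: (int \<Rightarrow> complex) \<Rightarrow> (int \<Rightarrow> complex).
           (\<forall>f g a b. l2w \<sigma> f \<longrightarrow> l2w \<sigma> g \<longrightarrow> L (\<lambda>n. a * f n + b * g n) = (\<lambda>n. a * L f n + b * L g n))
         \<and> (\<exists>C. \<forall>f. l2w \<sigma> f \<longrightarrow> l2w (-\<sigma>) (L f) \<and> wnorm (-\<sigma>) (L f) \<le> C * wnorm \<sigma> f)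
         \<and> (\<forall>e>0. \<forall>\<^sub>F \<epsilon> in at_right 0. \<forall>f. l2w \<sigma> f \<longrightarrow>
               wnorm (-\<sigma>) (\<lambda>n. resolvent q (complex_of_real \<omega> + \<i> * complex_of_real (s * \<epsilon>)) f n - L f n)
                 \<le> e * wnorm \<sigma> f)" (is "\<forall>s \<in> _. ?limit s")
proof
  fix s :: real assume s: "s \<in> {1, -1}"
  obtain \<delta> \<zeta>0 zt where \<delta>: "0 < \<delta>" and z0: "\<zeta>0 \<in> jost_domain \<delta>" "cmod \<zeta>0 = 1"
    and zt: "(zt \<longlongrightarrow> \<zeta>0) (at_right 0)" "\<forall>\<^sub>F \<epsilon> in at_right 0. zt \<epsilon> \<in> jost_domain \<delta> \<and> cmod (zt \<epsilon>) < 1"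
    and zt_\<omega>: "\<And>\<epsilon>. 2 - zt \<epsilon> - 1 / zt \<epsilon> = complex_of_real \<omega> + \<i> * complex_of_real (s * \<epsilon>)"
    using limiting_spectral_parameter[OF assms(2,3) s] by blast
  interpret jost_pair q \<delta> by unfold_locales (rule assms(1), rule \<delta>)
  have W0: "jost_wronskian q \<zeta>0 \<noteq> 0" by (rule jost_wronskian_nonzero[OF z0])
  have ztD: "\<forall>\<^sub>F \<epsilon> in at_right 0. zt \<epsilon> \<in> jost_domain \<delta>" using zt(2) by (rule eventually_mono) simp
  obtain \<Gamma> where G0: "\<And>n m. cmod (green_kernel q \<zeta>0 n m) \<le> \<Gamma>"
    and Gt: "\<forall>\<^sub>F \<epsilon> in at_right 0. jost_wronskian q (zt \<epsilon>) \<noteq> 0 \<and> (\<forall>n m. cmod (green_kernel q (zt \<epsilon>) n m) \<le> \<Gamma>)"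
    using green_kernel_eventually_bounded[OF zt(1) z0(1) ztD W0] by blast
  have R: "\<forall>\<^sub>F \<epsilon> in at_right 0. \<forall>f. l2w \<sigma> f \<longrightarrow>
      resolvent q (complex_of_real \<omega> + \<i> * complex_of_real (s * \<epsilon>)) f = kernel_apply (green_kernel q (zt \<epsilon>)) f"
    using zt(2) Gt eventually_at_right_less[of 0]
  proof eventually_elim
    case (elim \<epsilon>)
    have "Im (2 - zt \<epsilon> - 1 / zt \<epsilon>) \<noteq> 0" unfolding zt_\<omega> using elim(3) s by auto
    then show ?case using resolvent_eq_kernel_apply[of "zt \<epsilon>" \<sigma>] elim assms(4) unfolding zt_\<omega> by blast
  qed
  have "\<forall>\<^sub>F \<epsilon> in at_right 0. \<forall>n m. cmod (green_kernel q (zt \<epsilon>) n m) \<le> \<Gamma>"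
    using Gt by (rule eventually_mono) simp
  then show "?limit s"
    by (rule kernel_operator_limit[OF assms(4) G0 _ green_kernel_tendsto[OF zt(1) z0(1) ztD W0] R])
qed

end
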